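(* Assume $F$ is analytic on $\Omega$ and $$\gamma:=\sup_{n>1}\Big\|\frac{F'(x_* )^{-1}F^{(n)}(x_* )}{n!}\Big\|^{1/(n-1)}<+\infty .$$ Let $\kappa:=\sup\{t\in[0,1/\gamma): B(x_*,t)\subset\Omega\}$. Let $0\le\vartheta<1$, $0\le\omega_2<\omega_1$ with $\omega_1\vartheta+\omega_2<1$, $\lambda\in[0,(1-\omega_2-\omega_1\vartheta)/(\omega_1(1+\vartheta)))$, and set $a:=\omega_1(1+\vartheta)(1-3\lambda)+4(1-\omega_1\vartheta-\omega_2)$, $b:=1-\omega_1[(1+\vartheta)\lambda+\vartheta]-\omega_2$, $$\bar\sigma:=\min\Big\{\kappa,\frac{a-\sqrt{a^2-8b^2}}{4\gamma b}\Big\}.$$ Let $x_0\in C\cap B(x_*,\bar\sigma)\setminus\{x_*\}$, $\{\theta_k\}\subset[0,\lambda^2/2]$, and let $\{M_k\}$, $\{(s_k,r_k,y_k)\}$, $\{x_k\}$ be generated by the INL-CondG method (assume it does not stop). Assume for all $k\ge0$: $\|M_k^{-1}F'(x_k)\|\le\omega_1$, $\|M_k^{-1}F'(x_k)-I\|\le\omega_2$, and there are invertible $P_k$ and scalars $\eta_k$ with $\|P_kr_k\|\le\eta_k\|P_kF(x_k)\|$ and $0\le\eta_k\,\mathrm{cond}(P_kF'(x_k))\le\vartheta$. Then $\{x_k\}\subset B(x_*,\bar\sigma)\cap C$, $x_k\to x_*$, $$\|x_{k+1}-x_*\|<\|x_k-x_*\|,\qquad \limsup_{k\to\infty}\frac{\|x_{k+1}-x_*\|}{\|x_k-x_*\|}\le\omega_1[(1+\vartheta)\sqrt{2\tilde\theta}+\vartheta]+\omega_2,$$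 with $\tilde\theta=\limsup_k\theta_k$, and for all $k\ge0$ $$\|x_{k+1}-x_*\|\le\frac{\omega_1(1+\vartheta)(1+\lambda)\gamma}{2(1-\gamma\|x_0-x_*\|)^2-1}\|x_k-x_*\|^2+\big(\omega_1[(1+\vartheta)\lambda+\vartheta]+\omega_2\big)\|x_k-x_*\|.$$
   Context: Setting: $\Omega\subset\mathbb{R}^n$ is open, $F:\Omega\to\mathbb{R}^n$ is continuously differentiable with Jacobian $F'(x)$ and $n$-th derivative $F^{(n)}$, $C\subset\Omega$ is a nonempty convex compact set, and $x_*\in C$ satisfies $F(x_* )=0$ with $F'(x_* )$ nonsingular. $\|\cdot\|$ is the Euclidean norm on $\mathbb{R}^n$ and the induced operator (multilinear) norm; $B(a,\delta)$ is the open ball of center $a$ and radius $\delta$; $\mathrm{cond}(A)=\|A^{-1}\|\|A\|$. CondG procedure $z=\mathrm{CondG}(y,x,\varepsilon)$ (for $y\in\mathbb{R}^n$, $x\in C$, $\varepsilon\ge0$): set $z_1=x$, $t=1$. (P1) Compute an optimal solution $u_t$ of $g_t^*=\min_{u\in C}\langle z_t-y,u-z_t\rangle$. (P2) If $g_t^*\ge-\varepsilon$, set $z=z_t$ and stop; otherwise set $\alpha_t=\min\{1,-g_t^*/\|u_t-z_t\|^2\}$, $z_{t+1}=z_t+\alpha_t(u_t-z_t)$, $t\leftarrow t+1$ and go to (P1). INL-CondG method: given $x_0\in C$ and $\{\theta_j\}\subset[0,\infty)$, for $k=0,1,\dots$: if $F(x_k)=0$ stop; otherwise choose an invertible matrix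 $M_k$ (approximating $F'(x_k)$) and compute $(s_k,r_k,y_k)$ with $M_ks_k=-F(x_k)+r_k$, $y_k=x_k+s_k$; then set $x_{k+1}=\mathrm{CondG}(y_k,x_k,\theta_k\|s_k\|^2)$. *)

theory Defs
  imports "HOL-Analysis.Analysis"
begin

definition jac :: "(real^'n \<Rightarrow> real^'n) \<Rightarrow> real^'n \<Rightarrow> real^'n^'n" where
  "jac F x = matrix (frechet_derivative F (at x))"

definition opnorm :: "real^'n^'m \<Rightarrow> real" where
  "opnorm A = onorm (\<lambda>v. A *v v)"

definition cond :: "real^'n^'n \<Rightarrow> real" where
  "cond A = opnorm (matrix_inv A) * opnorm A"

(* k-th Frechet derivative as a k-linear map applied to the list of directions
   [h1,...,hk]:  F^(k+1)(x)[h1,...,hk+1] = D(y \<mapsto> F^(k)(y)[h2,...,hk+1])(x) h1 *)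
fun hderiv :: "nat \<Rightarrow> ('a::real_normed_vector \<Rightarrow> 'b::real_normed_vector) \<Rightarrow> 'a \<Rightarrow> 'a list \<Rightarrow> 'b" where
  "hderiv 0 F x hs = F x"
| "hderiv (Suc k) F x hs = frechet_derivative (\<lambda>y. hderiv k F y (tl hs)) (at x) (hd hs)"

definition real_analytic_on :: "('a::real_normed_vector \<Rightarrow> 'b::real_normed_vector) \<Rightarrow> 'a set \<Rightarrow> bool" where
  "real_analytic_on F \<Omega> \<longleftrightarrow>
     (\<forall>k hs. \<forall>x\<in>\<Omega>. (\<lambda>y. hderiv k F y hs) differentiable (at x)) \<and>
     (\<forall>x\<in>\<Omega>. \<exists>r>0. \<forall>y\<in>ball x r.
        (\<lambda>k. hderiv k F x (replicate k (y - x)) /\<^sub>R fact k) sums F y)"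

definition mlnorm :: "real^'n^'n \<Rightarrow> nat \<Rightarrow> (real^'n \<Rightarrow> real^'n) \<Rightarrow> real^'n \<Rightarrow> real" where
  "mlnorm A n F x = Sup {norm (A *v (hderiv n F x hs /\<^sub>R fact n)) | hs.
                          length hs = n \<and> (\<forall>h\<in>set hs. norm h \<le> 1)}"

definition gmin :: "'a::real_inner set \<Rightarrow> 'a \<Rightarrow> 'a \<Rightarrow> real" where
  "gmin C y z = Inf {inner (z - y) (u - z) | u. u \<in> C}"

(* condg C y \<epsilon> z w : the CondG procedure started at z_t = z (with target y and
   tolerance \<epsilon>) can terminate with output w. *)
inductive condg_run :: "'a::real_inner set \<Rightarrow> 'a \<Rightarrow> real \<Rightarrow> 'a \<Rightarrow> 'a \<Rightarrow> bool"
  for C y \<epsilon> where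
  stop: "gmin C y z \<ge> - \<epsilon> \<Longrightarrow> condg_run C y \<epsilon> z z"
| step: "u \<in> C \<Longrightarrow> inner (z - y) (u - z) = gmin C y z \<Longrightarrow> gmin C y z < - \<epsilon> \<Longrightarrow>
         \<alpha> = min 1 (- gmin C y z / (norm (u - z))\<^sup>2) \<Longrightarrow>
         condg_run C y \<epsilon> (z + \<alpha> *\<^sub>R (u - z)) w \<Longrightarrow> condg_run C y \<epsilon> z w"

definition CondG_out :: "'a::real_inner set \<Rightarrow> 'a \<Rightarrow> 'a \<Rightarrow> real \<Rightarrow> 'a \<Rightarrow> bool" where
  "CondG_out C y x \<epsilon> z \<longleftrightarrow> condg_run C y \<epsilon> x z"

end

theory Submission
  imports Defs "HOL-Complex_Analysis.Cauchy_Integral_Formula"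
begin

text \<open>
  Smale's \<open>\<gamma>\<close> bounds the normalized Taylor coefficients of \<open>F'(x\<^sub>*)\<^sup>-\<^sup>1F\<close> at the root, so on the
  ball of radius \<open>\<kappa>\<close> that Taylor series is dominated termwise by the scalar series of
  \<open>\<gamma>r\<^sup>2/(1 - \<gamma>r)\<close>. Differentiating the majorant gives \<open>\<parallel>F'(x\<^sub>*)\<^sup>-\<^sup>1F'(x) - I\<parallel> \<le> 1/(1 - \<gamma>\<rho>)\<^sup>2 - 1\<close>
  and \<open>\<parallel>F'(x)\<^sup>-\<^sup>1F(x) - (x - x\<^sub>*)\<parallel> \<le> \<gamma>\<rho>\<^sup>2/(2(1 - \<gamma>\<rho>)\<^sup>2 - 1)\<close> for \<open>\<rho> = \<parallel>x - x\<^sub>*\<parallel>\<close>.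
  An inexact Newton step controlled by \<open>\<omega>\<^sub>1, \<omega>\<^sub>2, \<vartheta>\<close> then moves the error to
  \<open>(\<omega>\<^sub>2 + \<omega>\<^sub>1\<vartheta>)\<rho>\<close> plus a multiple of that quadratic term, and the CondG output, being an
  \<open>\<theta>\<parallel>s\<parallel>\<^sup>2\<close>-stationary point of the projection onto \<open>C\<close>, is at most \<open>\<surd>\<theta> \<parallel>s\<parallel>\<close> farther from
  \<open>x\<^sub>*\<close> than the Newton point. The radius \<open>\<sigma>\<close> is exactly where the resulting
  quadratic-plus-linear bound becomes a contraction, which yields all the claims.

  That the Taylor series at \<open>x\<^sub>*\<close> actually represents \<open>F\<close> on the whole ball (analyticity only
  gives local expansions) follows along each segment from the identity theorem, after extending
  the one-variable series holomorphically to a disc.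
\<close>

lemma matrix_inv_mult:
  fixes A :: "real^'n^'n"
  assumes "invertible A"
  shows "A ** matrix_inv A = mat 1" "matrix_inv A ** A = mat 1"
proof -
  have "\<exists>A'. A ** A' = mat 1 \<and> A' ** A = mat 1" using assms unfolding invertible_def by blast
  then have "A ** matrix_inv A = mat 1 \<and> matrix_inv A ** A = mat 1"
    unfolding matrix_inv_def by (rule someI_ex)
  then show "A ** matrix_inv A = mat 1" "matrix_inv A ** A = mat 1" by auto
qed

lemma matrix_inv_mult_vector:
  fixes A :: "real^'n^'n"
  assumes "invertible A"
  shows "A *v (matrix_inv A *v v) = v" "matrix_inv A *v (A *v v) = v"
  using matrix_inv_mult[OF assms] by (simp_all add: matrix_vector_mul_assoc)

lemma norm_mult_vector_le_opnorm: "norm (A *v v) \<le> opnorm A * norm v"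
  unfolding opnorm_def by (rule onorm) simp

lemma opnorm_nonneg: "0 \<le> opnorm A"
  unfolding opnorm_def by (rule onorm_pos_le) simp

lemma norm_mult_vector_le:
  "opnorm A \<le> c \<Longrightarrow> norm (A *v v) \<le> c * norm v"
  by (meson mult_right_mono norm_ge_zero norm_mult_vector_le_opnorm order_trans)

lemma invertible_if_kernel_trivial:
  fixes A :: "real^'n^'n"
  assumes "\<And>x. A *v x = 0 \<Longrightarrow> x = 0"
  shows "invertible A"
  using assms matrix_left_invertible_ker invertible_left_inverse by blast

section \<open>Multilinear maps on lists of vectors\<close>

definition multilinear :: "nat \<Rightarrow> ('a::real_vector list \<Rightarrow> 'b::real_vector) \<Rightarrow> bool" where
  "multilinear k M \<longleftrightarrow> (\<forall>hs i. length hs = k \<longrightarrow> i < k \<longrightarrow> linear (\<lambda>h. M (hs[i:=h])))"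

lemma multilinear_Cons: "multilinear (Suc k) M \<Longrightarrow> multilinear k (\<lambda>hs. M (a # hs))"
  unfolding multilinear_def
proof (intro allI impI)
  fix hs :: "'a list" and i
  assume "\<forall>hs i. length hs = Suc k \<longrightarrow> i < Suc k \<longrightarrow> linear (\<lambda>h. M (hs[i := h]))"
    and "length hs = k" "i < k"
  then have "linear (\<lambda>h. M ((a # hs)[Suc i := h]))" by (metis length_Cons Suc_less_eq)
  then show "linear (\<lambda>h. M (a # hs[i := h]))" by simp
qed

lemma multilinear_linear_head:
  assumes "multilinear (Suc k) M" "length hs = k"
  shows "linear (\<lambda>h. M (h # hs))"
proof -
  have "linear (\<lambda>h. M ((0 # hs)[0 := h]))"
    using assms unfolding multilinear_def by (metis length_Cons zero_less_Suc)
  then show ?thesis by simp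
qed

lemma multilinear_compose: "multilinear k M \<Longrightarrow> linear f \<Longrightarrow> multilinear k (\<lambda>hs. f (M hs))"
  unfolding multilinear_def using linear_compose[unfolded o_def] by blast

lemma multilinear_scale:
  "multilinear k M \<Longrightarrow> length hs = k \<Longrightarrow> length cs = k \<Longrightarrow>
    M (map2 (\<lambda>c h. c *\<^sub>R h) cs hs) = prod_list cs *\<^sub>R M hs"
proof (induction k arbitrary: M hs cs)
  case 0
  then show ?case by simp
next
  case (Suc k)
  obtain h hs' where hs: "hs = h # hs'" using Suc.prems by (cases hs) auto
  obtain c cs' where cs: "cs = c # cs'" using Suc.prems by (cases cs) auto
  have L: "linear (\<lambda>g. M (g # map2 (\<lambda>c h. c *\<^sub>R h) cs' hs'))"
    using Suc.prems hs cs by (intro multilinear_linear_head) auto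
  have "M (map2 (\<lambda>c h. c *\<^sub>R h) cs hs) = c *\<^sub>R M (h # map2 (\<lambda>c h. c *\<^sub>R h) cs' hs')"
    using linear_scale[OF L] by (simp add: hs cs)
  also have "M (h # map2 (\<lambda>c h. c *\<^sub>R h) cs' hs') = prod_list cs' *\<^sub>R M (h # hs')"
    using Suc.IH[OF multilinear_Cons[OF Suc.prems(1)], of hs' cs'] Suc.prems hs cs by simp
  finally show ?case by (simp add: hs cs)
qed

lemma multilinear_replicate_scale:
  "multilinear k M \<Longrightarrow> M (replicate k (c *\<^sub>R v)) = c ^ k *\<^sub>R M (replicate k v)"
  using multilinear_scale[of k M "replicate k v" "replicate k c"]
  by (simp add: prod_list_replicate zip_replicate)

lemma multilinear_eq_0:
  assumes "multilinear k M" "length hs = k" "i < k" "hs ! i = 0"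
  shows "M hs = 0"
proof -
  have "linear (\<lambda>h. M (hs[i:=h]))" using assms unfolding multilinear_def by blast
  then have "M (hs[i:=0]) = 0" using linear_0 by fastforce
  then show ?thesis using assms by (metis list_update_id)
qed

lemma linear_cart_basis_expansion:
  fixes f :: "real^'n \<Rightarrow> 'b::real_vector"
  assumes "linear f"
  shows "f h = (\<Sum>j\<in>UNIV. (h $ j) *\<^sub>R f (axis j 1))"
proof -
  have "f h = f (\<Sum>j\<in>UNIV. (h $ j) *\<^sub>R axis j 1)"
    using basis_expansion[of h] by (simp add: scalar_mult_eq_scaleR)
  also have "\<dots> = (\<Sum>j\<in>UNIV. (h $ j) *\<^sub>R f (axis j 1))"
    using assms by (simp add: linear_sum linear_scale)
  finally show ?thesis .
qed

lemma multilinear_bounded: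
  fixes M :: "(real^'n) list \<Rightarrow> 'b::real_normed_vector"
  shows "multilinear k M \<Longrightarrow> \<exists>B\<ge>0. \<forall>hs. length hs = k \<longrightarrow> norm (M hs) \<le> B * prod_list (map norm hs)"
proof (induction k arbitrary: M)
  case 0
  show ?case by (rule exI[of _ "norm (M [])"]) auto
next
  case (Suc k)
  have "\<forall>j. \<exists>B\<ge>0. \<forall>hs. length hs = k \<longrightarrow> norm (M (axis j 1 # hs)) \<le> B * prod_list (map norm hs)"
    using Suc.IH[OF multilinear_Cons[OF Suc.prems]] by blast
  then obtain B where B: "\<And>j. B j \<ge> 0"
    "\<And>j hs. length hs = k \<Longrightarrow> norm (M (axis j 1 # hs)) \<le> B j * prod_list (map norm hs)"
    by metis
  show ?case
  proof (intro exI[of _ "\<Sum>j\<in>UNIV. B j"] conjI allI impI)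
    show "0 \<le> (\<Sum>j\<in>UNIV. B j)" using B(1) by (simp add: sum_nonneg)
    fix hs :: "(real^'n) list"
    assume "length hs = Suc k"
    then obtain h hs' where hs: "hs = h # hs'" "length hs' = k" by (cases hs) auto
    have "linear (\<lambda>g. M (g # hs'))" using Suc.prems hs by (intro multilinear_linear_head) auto
    from linear_cart_basis_expansion[OF this, of h]
    have "norm (M hs) = norm (\<Sum>j\<in>UNIV. (h $ j) *\<^sub>R M (axis j 1 # hs'))"
      by (simp add: hs)
    also have "\<dots> \<le> (\<Sum>j\<in>UNIV. norm ((h $ j) *\<^sub>R M (axis j 1 # hs')))" by (rule norm_sum)
    also have "\<dots> \<le> (\<Sum>j\<in>UNIV. norm h * (B j * prod_list (map norm hs')))"
    proof (rule sum_mono)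
      fix j
      have "\<bar>h $ j\<bar> * norm (M (axis j 1 # hs')) \<le> norm h * (B j * prod_list (map norm hs'))"
        by (rule mult_mono) (auto simp: component_le_norm_cart B hs)
      then show "norm ((h $ j) *\<^sub>R M (axis j 1 # hs')) \<le> norm h * (B j * prod_list (map norm hs'))"
        by simp
    qed
    also have "\<dots> = (\<Sum>j\<in>UNIV. B j * (norm h * prod_list (map norm hs')))"
      by (simp add: mult.left_commute)
    also have "\<dots> = (\<Sum>j\<in>UNIV. B j) * (norm h * prod_list (map norm hs'))"
      by (rule sum_distrib_right[symmetric])
    finally show "norm (M hs) \<le> (\<Sum>j\<in>UNIV. B j) * prod_list (map norm hs)"
      by (simp add: hs)
  qed
qed

lemma prod_list_le_one:
  "(\<And>x. x \<in> set xs \<Longrightarrow> 0 \<le> x \<and> x \<le> (1::real)) \<Longrightarrow> 0 \<le> prod_list xs \<and> prod_list xs \<le> 1"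
  by (induction xs) (simp_all add: mult_le_one)

definition multinorm :: "nat \<Rightarrow> ((real^'n) list \<Rightarrow> 'b::real_normed_vector) \<Rightarrow> real" where
  "multinorm k M = Sup {norm (M hs) | hs. length hs = k \<and> (\<forall>h\<in>set hs. norm h \<le> 1)}"

lemma multinorm_bdd_above:
  fixes M :: "(real^'n) list \<Rightarrow> 'b::real_normed_vector"
  assumes "multilinear k M"
  shows "bdd_above {norm (M hs) | hs. length hs = k \<and> (\<forall>h\<in>set hs. norm h \<le> 1)}"
proof -
  obtain B where B: "B \<ge> 0" "\<And>hs. length hs = k \<Longrightarrow> norm (M hs) \<le> B * prod_list (map norm hs)"
    using multilinear_bounded[OF assms] by blast
  have "norm (M hs) \<le> B" if "length hs = k" "\<forall>h\<in>set hs. norm h \<le> 1" for hs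
  proof -
    have "prod_list (map norm hs) \<le> 1" using that(2) prod_list_le_one[of "map norm hs"] by force
    then show ?thesis using B(1) B(2)[OF that(1)] by (meson mult_left_le order_trans)
  qed
  then show ?thesis by (intro bdd_aboveI[of _ B]) blast
qed

lemma multinorm_upper:
  fixes M :: "(real^'n) list \<Rightarrow> 'b::real_normed_vector"
  assumes "multilinear k M" "length hs = k" "\<forall>h\<in>set hs. norm h \<le> 1"
  shows "norm (M hs) \<le> multinorm k M"
  unfolding multinorm_def by (rule cSup_upper[OF _ multinorm_bdd_above[OF assms(1)]]) (use assms in blast)

lemma multinorm_nonneg:
  fixes M :: "(real^'n) list \<Rightarrow> 'b::real_normed_vector"
  assumes "multilinear k M"
  shows "0 \<le> multinorm k M"
  using multinorm_upper[OF assms, of "replicate k 0"] by (simp add: order_trans[OF norm_ge_zero])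

lemma multinorm_bound:
  fixes M :: "(real^'n) list \<Rightarrow> 'b::real_normed_vector"
  assumes "multilinear k M" "length hs = k"
  shows "norm (M hs) \<le> multinorm k M * prod_list (map norm hs)"
proof (cases "\<exists>i<k. hs ! i = 0")
  case True
  then have "M hs = 0" using multilinear_eq_0[OF assms] by blast
  moreover have "0 \<le> prod_list (map norm hs)" by (rule prod_list_nonneg) auto
  ultimately show ?thesis using multinorm_nonneg[OF assms(1)] by simp
next
  case False
  then have nz: "\<forall>h\<in>set hs. h \<noteq> 0" using assms(2) by (metis in_set_conv_nth)
  define us where "us = map (\<lambda>h. (1 / norm h) *\<^sub>R h) hs"
  have "map2 (\<lambda>c h. c *\<^sub>R h) (map norm hs) us = hs"
    unfolding us_def using nz by (induction hs) auto
  then have "M hs = prod_list (map norm hs) *\<^sub>R M us"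
    using multilinear_scale[OF assms(1), of us "map norm hs"] assms(2) by (simp add: us_def)
  moreover have "norm (M us) \<le> multinorm k M"
    using assms nz by (intro multinorm_upper) (auto simp: us_def)
  moreover have "0 \<le> prod_list (map norm hs)" by (rule prod_list_nonneg) auto
  ultimately show ?thesis by (simp add: mult_left_mono mult.commute[of _ "prod_list _"])
qed

text \<open>Telescoping \<open>M(a,\<dots>,a) - M(b,\<dots>,b)\<close> one slot at a time.\<close>

lemma multilinear_replicate_diff_bound:
  fixes M :: "(real^'n) list \<Rightarrow> 'b::real_normed_vector"
  assumes "multilinear k M" "K \<ge> 0" "\<And>hs. length hs = k \<Longrightarrow> norm (M hs) \<le> K * prod_list (map norm hs)"
  shows "norm (M (replicate k a) - M (replicate k b)) \<le> K * ((norm b + norm (a - b)) ^ k - norm b ^ k)"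
  using assms
proof (induction k arbitrary: M K)
  case 0
  then show ?case by simp
next
  case (Suc k)
  define Mb where "Mb = (\<lambda>hs. M (b # hs))"
  have "norm (Mb (replicate k a) - Mb (replicate k b)) \<le> (K * norm b) * ((norm b + norm (a - b)) ^ k - norm b ^ k)"
    using Suc.prems Suc.prems(3)[of "b # hs" for hs]
    by (intro Suc.IH) (auto simp: Mb_def multilinear_Cons mult_ac)
  moreover have "norm (M ((a - b) # replicate k a)) \<le> K * (norm (a - b) * (norm b + norm (a - b)) ^ k)"
  proof -
    have "norm (M ((a - b) # replicate k a)) \<le> K * (norm (a - b) * norm a ^ k)"
      using Suc.prems(3)[of "(a - b) # replicate k a"] by (simp add: prod_list_replicate)
    also have "\<dots> \<le> K * (norm (a - b) * (norm b + norm (a - b)) ^ k)"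
      using Suc.prems(2) norm_triangle_sub[of a b]
      by (intro mult_left_mono power_mono) (auto simp: add.commute)
    finally show ?thesis .
  qed
  moreover have "M (replicate (Suc k) a) - M (replicate (Suc k) b)
      = M ((a - b) # replicate k a) + (Mb (replicate k a) - Mb (replicate k b))"
    using linear_diff[OF multilinear_linear_head[OF Suc.prems(1)], of "replicate k a" a b]
    by (simp add: Mb_def)
  then have "norm (M (replicate (Suc k) a) - M (replicate (Suc k) b))
      \<le> norm (M ((a - b) # replicate k a)) + norm (Mb (replicate k a) - Mb (replicate k b))"
    by (simp add: norm_triangle_ineq)
  ultimately have "norm (M (replicate (Suc k) a) - M (replicate (Suc k) b))
      \<le> K * (norm (a - b) * (norm b + norm (a - b)) ^ k) + (K * norm b) * ((norm b + norm (a - b)) ^ k - norm b ^ k)"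
    by linarith
  also have "\<dots> = K * ((norm b + norm (a - b)) ^ Suc k - norm b ^ Suc k)"
    by (simp add: algebra_simps)
  finally show ?case .
qed

section \<open>Higher derivatives\<close>

definition hderiv_differentiable_on :: "(real^'n \<Rightarrow> real^'n) \<Rightarrow> (real^'n) set \<Rightarrow> bool" where
  "hderiv_differentiable_on F \<Omega> \<longleftrightarrow> (\<forall>k hs. \<forall>x\<in>\<Omega>. (\<lambda>y. hderiv k F y hs) differentiable (at x))"

lemma real_analytic_on_hderiv_differentiable:
  "real_analytic_on F \<Omega> \<Longrightarrow> hderiv_differentiable_on F \<Omega>"
  unfolding real_analytic_on_def hderiv_differentiable_on_def by blast

lemma linear_frechet_derivative_parametric:
  fixes G :: "'a::real_normed_vector \<Rightarrow> 'b::real_normed_vector \<Rightarrow> 'c::real_normed_vector"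
  assumes "open \<Omega>" "x \<in> \<Omega>"
    and lin: "\<And>y. y \<in> \<Omega> \<Longrightarrow> linear (\<lambda>h. G h y)"
    and dif: "\<And>h. G h differentiable (at x)"
  shows "linear (\<lambda>h. frechet_derivative (G h) (at x) v)"
proof -
  define D where "D = (\<lambda>h. frechet_derivative (G h) (at x))"
  have GD: "(G h has_derivative D h) (at x)" for h
    unfolding D_def using dif frechet_derivative_works by blast
  have "D (h1 + h2) = (\<lambda>v. D h1 v + D h2 v)" for h1 h2
  proof -
    have "(G (h1 + h2) has_derivative (\<lambda>v. D h1 v + D h2 v)) (at x)"
      by (rule has_derivative_transform_within_open[OF has_derivative_add[OF GD GD] assms(1,2)])
         (simp add: linear_add[OF lin])
    then show ?thesis unfolding D_def by (rule frechet_derivative_at[symmetric])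
  qed
  moreover have "D (c *\<^sub>R h) = (\<lambda>v. c *\<^sub>R D h v)" for c h
  proof -
    have "(G (c *\<^sub>R h) has_derivative (\<lambda>v. c *\<^sub>R D h v)) (at x)"
      by (rule has_derivative_transform_within_open[OF has_derivative_scaleR_right[OF GD] assms(1,2)])
         (simp add: linear_scale[OF lin])
    then show ?thesis unfolding D_def by (rule frechet_derivative_at[symmetric])
  qed
  ultimately have "linear (\<lambda>h. D h v)" by (intro linearI) simp_all
  then show ?thesis by (simp add: D_def)
qed

lemma multilinear_hderiv:
  assumes "open \<Omega>" "hderiv_differentiable_on F \<Omega>" "x \<in> \<Omega>"
  shows "multilinear k (hderiv k F x)"
  using assms(3)
proof (induction k arbitrary: x)
  case 0
  then show ?case by (simp add: multilinear_def)
next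
  case (Suc k)
  have dif: "\<And>hs y. y \<in> \<Omega> \<Longrightarrow> (\<lambda>y. hderiv k F y hs) differentiable (at y)"
    using assms(2) unfolding hderiv_differentiable_on_def by blast
  show ?case unfolding multilinear_def
  proof (intro allI impI)
    fix hs :: "(real^'a) list" and i
    assume hs: "length hs = Suc k" "i < Suc k"
    then obtain a hs' where hs': "hs = a # hs'" "length hs' = k" by (cases hs) auto
    show "linear (\<lambda>h. hderiv (Suc k) F x (hs[i := h]))"
    proof (cases i)
      case 0
      then show ?thesis using hs' linear_frechet_derivative[OF dif[OF Suc.prems]] by simp
    next
      case (Suc j)
      have "linear (\<lambda>h. frechet_derivative (\<lambda>y. hderiv k F y (hs'[j:=h])) (at x) a)"
        using Suc.IH hs hs' Suc dif[OF Suc.prems]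
        by (intro linear_frechet_derivative_parametric[OF assms(1) Suc.prems])
           (auto simp: multilinear_def)
      then show ?thesis using Suc hs' by simp
    qed
  qed
qed

lemma has_vector_derivative_hderiv_line:
  assumes "hderiv_differentiable_on F \<Omega>" "p + t *\<^sub>R v \<in> \<Omega>"
  shows "((\<lambda>t. hderiv k F (p + t *\<^sub>R v) hs) has_vector_derivative
          hderiv (Suc k) F (p + t *\<^sub>R v) (v # hs)) (at t)"
proof -
  define G where "G = (\<lambda>y. hderiv k F y hs)"
  define q where "q = p + t *\<^sub>R v"
  have "G differentiable (at q)"
    using assms unfolding hderiv_differentiable_on_def G_def q_def by blast
  then have GD: "(G has_derivative frechet_derivative G (at q)) (at q)"
    and lin: "linear (frechet_derivative G (at q))"
    by (simp_all add: frechet_derivative_works linear_frechet_derivative)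
  have "((\<lambda>t. p + t *\<^sub>R v) has_derivative (\<lambda>s. s *\<^sub>R v)) (at t)"
    by (auto intro!: derivative_eq_intros)
  from has_derivative_compose[OF this GD[unfolded q_def]]
  have "((\<lambda>t. G (p + t *\<^sub>R v)) has_derivative (\<lambda>s. frechet_derivative G (at q) (s *\<^sub>R v))) (at t)"
    by (simp add: o_def q_def)
  then show ?thesis
    unfolding has_vector_derivative_def G_def q_def
    by (simp add: linear_scale[OF lin[unfolded G_def q_def]])
qed

lemma jac_mult_vector:
  assumes "F differentiable (at y)"
  shows "jac F y *v h = frechet_derivative F (at y) h"
  using matrix_vector_mul(2)[OF linear_frechet_derivative[OF assms]] unfolding jac_def by metis

section \<open>Taylor series of real analytic maps\<close>

definition has_taylor_expansion_at :: "(nat \<Rightarrow> real \<Rightarrow> real) \<Rightarrow> real \<Rightarrow> bool" where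
  "has_taylor_expansion_at f t \<longleftrightarrow>
     (\<exists>r>0. \<forall>s. \<bar>s - t\<bar> < r \<longrightarrow> (\<lambda>k. f k t / fact k * (s - t) ^ k) sums f 0 s)"

lemma derivative_chains_eq_on_open:
  fixes f g :: "nat \<Rightarrow> real \<Rightarrow> real"
  assumes "open W"
    and f': "\<And>k s. s \<in> W \<Longrightarrow> (f k has_real_derivative f (Suc k) s) (at s)"
    and g': "\<And>k s. s \<in> W \<Longrightarrow> (g k has_real_derivative g (Suc k) s) (at s)"
    and eq: "\<And>s. s \<in> W \<Longrightarrow> f 0 s = g 0 s"
    and s: "s \<in> W"
  shows "f k s = g k s"
  using s
proof (induction k arbitrary: s)
  case 0
  then show ?case by (rule eq)
next
  case (Suc k)
  have "(g k has_real_derivative f (Suc k) s) (at s)"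
    by (rule has_field_derivative_transform_within_open[OF f' \<open>open W\<close>]) (use Suc in auto)
  then show ?case using g'[OF Suc.prems] by (rule DERIV_unique)
qed

lemma derivative_chains_eq_near:
  fixes f g :: "nat \<Rightarrow> real \<Rightarrow> real"
  assumes V: "open V" "t0 \<in> V"
    and f': "\<And>k s. s \<in> V \<Longrightarrow> (f k has_real_derivative f (Suc k) s) (at s)"
    and g': "\<And>k s. s \<in> V \<Longrightarrow> (g k has_real_derivative g (Suc k) s) (at s)"
    and taylor: "has_taylor_expansion_at f t0" "has_taylor_expansion_at g t0"
    and eq: "\<And>k. f k t0 = g k t0"
  obtains e where "0 < e" "\<And>k s. dist s t0 < e \<Longrightarrow> f k s = g k s"
proof -
  obtain rf where rf: "rf > 0" "\<And>s. \<bar>s - t0\<bar> < rf \<Longrightarrow> (\<lambda>k. f k t0 / fact k * (s - t0) ^ k) sums f 0 s"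
    using taylor(1) unfolding has_taylor_expansion_at_def by blast
  obtain rg where rg: "rg > 0" "\<And>s. \<bar>s - t0\<bar> < rg \<Longrightarrow> (\<lambda>k. g k t0 / fact k * (s - t0) ^ k) sums g 0 s"
    using taylor(2) unfolding has_taylor_expansion_at_def by blast
  obtain rV where rV: "rV > 0" "ball t0 rV \<subseteq> V" using V by (meson openE)
  define W where "W = ball t0 (min rV (min rf rg))"
  have eqW: "f 0 s = g 0 s" if "s \<in> W" for s
  proof -
    have "\<bar>s - t0\<bar> < rf" "\<bar>s - t0\<bar> < rg" using that by (auto simp: W_def dist_real_def)
    with rf(2) rg(2) have "(\<lambda>k. f k t0 / fact k * (s - t0) ^ k) sums f 0 s"
      "(\<lambda>k. f k t0 / fact k * (s - t0) ^ k) sums g 0 s"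
      using eq by auto
    then show ?thesis by (rule sums_unique2)
  qed
  have "W \<subseteq> V" using rV(2) by (auto simp: W_def)
  then have "f k s = g k s" if "s \<in> W" for k s
    by (intro derivative_chains_eq_on_open[of W f g, OF _ _ _ eqW that])
       (auto simp: W_def intro: f' g')
  then show ?thesis
    using that[of "min rV (min rf rg)"] rf rg rV by (auto simp: W_def dist_commute)
qed

text \<open>Identity theorem for real analytic functions on an interval, phrased for chains of derivatives
  \<open>f (Suc k) = (f k)'\<close>: agreement of all derivatives at one end propagates along the interval.\<close>

lemma derivative_chains_eq_on_interval:
  fixes f g :: "nat \<Rightarrow> real \<Rightarrow> real"
  assumes V: "open V" "{a..b} \<subseteq> V"
    and f': "\<And>k s. s \<in> V \<Longrightarrow> (f k has_real_derivative f (Suc k) s) (at s)"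
    and g': "\<And>k s. s \<in> V \<Longrightarrow> (g k has_real_derivative g (Suc k) s) (at s)"
    and f_taylor: "\<And>t. t \<in> {a..b} \<Longrightarrow> has_taylor_expansion_at f t"
    and g_taylor: "\<And>t. t \<in> {a..b} \<Longrightarrow> has_taylor_expansion_at g t"
    and start: "\<And>k. f k a = g k a"
    and t: "t \<in> {a..b}"
  shows "f 0 t = g 0 t"
proof -
  define S where "S = {t\<in>{a..b}. \<forall>k. f k t = g k t}"
  have "openin (top_of_set {a..b}) S"
    unfolding openin_euclidean_subtopology_iff
  proof (intro conjI ballI)
    show "S \<subseteq> {a..b}" by (auto simp: S_def)
    fix t0
    assume t0: "t0 \<in> S"
    then have t0ab: "t0 \<in> {a..b}" by (auto simp: S_def)
    moreover have "t0 \<in> V" using t0ab V(2) by blast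
    moreover have "f k t0 = g k t0" for k using t0 by (simp add: S_def)
    ultimately obtain e where "0 < e" "\<And>k s. dist s t0 < e \<Longrightarrow> f k s = g k s"
      using derivative_chains_eq_near[OF V(1) _ f' g' f_taylor g_taylor] by metis
    then show "\<exists>e>0. \<forall>t\<in>{a..b}. dist t t0 < e \<longrightarrow> t \<in> S" by (auto simp: S_def)
  qed
  moreover have "closedin (top_of_set {a..b}) S"
  proof -
    have "continuous_on {a..b} (\<lambda>t. f k t - g k t)" for k
    proof (intro continuous_at_imp_continuous_on ballI)
      fix t
      assume "t \<in> {a..b}"
      then have "t \<in> V" using V by blast
      then show "isCont (\<lambda>t. f k t - g k t) t"
        using f' g' by (intro continuous_intros DERIV_isCont) blast+
    qed
    then have "closedin (top_of_set {a..b}) (\<Inter>k. {t\<in>{a..b}. f k t - g k t = 0})"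
      by (intro closedin_INT continuous_closedin_preimage_constant) auto
    moreover have "S = (\<Inter>k. {t\<in>{a..b}. f k t - g k t = 0})" by (auto simp: S_def)
    ultimately show ?thesis by simp
  qed
  moreover have "a \<in> S" using start t by (auto simp: S_def)
  moreover have "connected {a..b}" by simp
  ultimately have "S = {a..b}"
    using connected_clopen[of "{a..b}"] by blast
  then show ?thesis using t by (auto simp: S_def)
qed
lemma Re_mult_of_real_divide_fact: "Re (z * complex_of_real x / fact n) = Re z * x / fact n"
proof -
  have "Re (z * complex_of_real x / fact n) = Re (z * complex_of_real x) / fact n"
    by (metis Re_divide_of_real of_real_fact)
  also have "Re (z * complex_of_real x) = Re z * x" by (simp add: complex_of_real_def)
  finally show ?thesis .
qed

lemma holomorphic_Re_derivative_chain:
  assumes "P holomorphic_on ball 0 \<rho>" "\<bar>s\<bar> < \<rho>"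
  shows "((\<lambda>s. Re ((deriv ^^ k) P (complex_of_real s))) has_real_derivative
           Re ((deriv ^^ Suc k) P (complex_of_real s))) (at s)"
proof -
  have "((deriv ^^ k) P has_field_derivative (deriv ^^ Suc k) P (complex_of_real s)) (at (complex_of_real s))"
    using holomorphic_derivI[OF holomorphic_higher_deriv[OF assms(1)], of _ k] assms(2) by simp
  moreover have "(complex_of_real has_vector_derivative 1) (at s)"
    unfolding of_real_def by (auto intro!: derivative_eq_intros)
  ultimately have "(((deriv ^^ k) P \<circ> complex_of_real) has_vector_derivative
      1 * (deriv ^^ Suc k) P (complex_of_real s)) (at s)"
    using field_vector_diff_chain_at by blast
  then show ?thesis using has_field_derivative_Re by (simp add: o_def)
qed

lemma holomorphic_Re_has_taylor_expansion:
  assumes "P holomorphic_on ball 0 \<rho>" "\<bar>t\<bar> < \<rho>"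
  shows "has_taylor_expansion_at (\<lambda>k s. Re ((deriv ^^ k) P (complex_of_real s))) t"
  unfolding has_taylor_expansion_at_def
proof (intro exI[of _ "\<rho> - \<bar>t\<bar>"] conjI allI impI)
  show "\<rho> - \<bar>t\<bar> > 0" using assms(2) by simp
  fix s
  assume s: "\<bar>s - t\<bar> < \<rho> - \<bar>t\<bar>"
  have "ball (complex_of_real t) (\<rho> - \<bar>t\<bar>) \<subseteq> ball 0 \<rho>"
  proof
    fix z
    assume "z \<in> ball (complex_of_real t) (\<rho> - \<bar>t\<bar>)"
    moreover have "norm z \<le> norm (complex_of_real t) + dist (complex_of_real t) z"
      by (metis dist_0_norm dist_triangle)
    ultimately show "z \<in> ball 0 \<rho>" by simp
  qed
  moreover have "complex_of_real s \<in> ball (complex_of_real t) (\<rho> - \<bar>t\<bar>)"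
    using s by (simp add: dist_norm norm_minus_commute flip: of_real_diff)
  ultimately have "(\<lambda>n. (deriv ^^ n) P (complex_of_real t) / fact n * (complex_of_real s - complex_of_real t) ^ n)
      sums P (complex_of_real s)"
    by (intro holomorphic_power_series holomorphic_on_subset[OF assms(1)])
  from sums_Re[OF this]
  show "(\<lambda>k. Re ((deriv ^^ k) P (complex_of_real t)) / fact k * (s - t) ^ k) sums Re ((deriv ^^ 0) P (complex_of_real s))"
    by (simp add: Re_mult_of_real_divide_fact flip: of_real_power of_real_diff)
qed

text \<open>If the Taylor series at \<open>0\<close> of a locally analytic chain converges beyond \<open>1\<close>, it represents
  the function on all of \<open>[0, 1]\<close>: the series extends holomorphically to a disc, and the real part of
  that extension agrees with the chain by the identity theorem.\<close>

lemma taylor_series_sums_on_unit_interval: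
  fixes f :: "nat \<Rightarrow> real \<Rightarrow> real"
  assumes U: "open U" "{0..1} \<subseteq> U"
    and f': "\<And>k t. t \<in> U \<Longrightarrow> (f k has_real_derivative f (Suc k) t) (at t)"
    and f_taylor: "\<And>t. t \<in> {0..1} \<Longrightarrow> has_taylor_expansion_at f t"
    and \<rho>: "\<rho> > 1" "summable (\<lambda>k. \<bar>f k 0 / fact k\<bar> * \<rho> ^ k)"
    and t: "t \<in> {0..1}"
  shows "(\<lambda>k. f k 0 / fact k * t ^ k) sums f 0 t"
proof -
  define a where "a = Abs_fps (\<lambda>k. complex_of_real (f k 0 / fact k))"
  define P where "P = eval_fps a"
  define g where "g = (\<lambda>k s. Re ((deriv ^^ k) P (complex_of_real s)))"
  have "(\<lambda>n. norm (fps_nth a n * complex_of_real \<rho> ^ n)) = (\<lambda>k. \<bar>f k 0 / fact k\<bar> * \<rho> ^ k)"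
    using \<rho>(1) by (simp add: a_def norm_mult norm_power norm_divide fun_eq_iff)
  then have "summable (\<lambda>n. fps_nth a n * complex_of_real \<rho> ^ n)"
    using \<rho>(2) summable_norm_cancel by metis
  from conv_radius_geI[OF this]
  have rad: "ereal \<rho> \<le> fps_conv_radius a"
    using \<rho>(1) by (simp add: fps_conv_radius_def)
  have in_disc: "ereal (norm z) < fps_conv_radius a" if "norm z < \<rho>" for z
  proof -
    have "ereal (norm z) < ereal \<rho>" using that by simp
    then show ?thesis using rad by (rule less_le_trans)
  qed
  have sums_P: "(\<lambda>k. fps_nth a k * z ^ k) sums P z" if "norm z < \<rho>" for z
    unfolding P_def by (rule sums_eval_fps[OF in_disc[OF that]])
  have hol: "P holomorphic_on ball 0 \<rho>"
    unfolding P_def using in_disc by (intro holomorphic_on_eval_fps) (auto simp: eball_def)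
  define V where "V = U \<inter> ball 0 \<rho>"
  have "f 0 t = g 0 t"
  proof (rule derivative_chains_eq_on_interval[where V=V and f=f and g=g and a=0 and b=1])
    show "open V" "{0..1} \<subseteq> V" using U \<rho>(1) by (auto simp: V_def)
    show "(f k has_real_derivative f (Suc k) s) (at s)" if "s \<in> V" for k s
      using that f' by (auto simp: V_def)
    show "(g k has_real_derivative g (Suc k) s) (at s)" if "s \<in> V" for k s
      using that hol unfolding g_def by (intro holomorphic_Re_derivative_chain) (auto simp: V_def)
    show "has_taylor_expansion_at g s" if "s \<in> {0..1}" for s
      using that \<rho>(1) hol unfolding g_def by (intro holomorphic_Re_has_taylor_expansion) auto
    show "f k 0 = g k 0" for k
    proof -
      have "fps_conv_radius a > 0" using in_disc[of 0] \<rho>(1) by (simp add: zero_ereal_def)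
      from fps_nth_conv_deriv[OF this, of k]
      have "(deriv ^^ k) P 0 = fact k * complex_of_real (f k 0 / fact k)"
        by (simp add: P_def a_def)
      then show ?thesis by (simp add: g_def)
    qed
  qed (use f_taylor t in auto)
  moreover have "(\<lambda>k. f k 0 / fact k * t ^ k) sums g 0 t"
    using sums_Re[OF sums_P[of "complex_of_real t"]] t \<rho>(1)
    by (simp add: g_def a_def Re_mult_of_real_divide_fact flip: of_real_power)
  ultimately show ?thesis by simp
qed

lemma sums_vec:
  fixes f :: "nat \<Rightarrow> real^'n"
  assumes "\<And>i. (\<lambda>k. f k $ i) sums (s $ i)"
  shows "f sums s"
  unfolding sums_def
proof (rule vec_tendstoI)
  fix i
  have "(\<lambda>n. \<Sum>k<n. f k $ i) \<longlonglongrightarrow> s $ i" using assms[of i] unfolding sums_def .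
  then show "(\<lambda>n. (\<Sum>k<n. f k) $ i) \<longlonglongrightarrow> s $ i" by (simp add: sum_component)
qed

lemma hderiv_line_has_taylor_expansion:
  fixes F :: "real^'n \<Rightarrow> real^'n"
  assumes "open \<Omega>" "real_analytic_on F \<Omega>" "p + t *\<^sub>R v \<in> \<Omega>"
  shows "has_taylor_expansion_at (\<lambda>k t. hderiv k F (p + t *\<^sub>R v) (replicate k v) $ i) t"
  unfolding has_taylor_expansion_at_def
proof -
  define q where "q = p + t *\<^sub>R v"
  obtain r where r: "r > 0" "\<And>y. y \<in> ball q r \<Longrightarrow>
      (\<lambda>k. hderiv k F q (replicate k (y - q)) /\<^sub>R fact k) sums F y"
    using assms(2,3) unfolding real_analytic_on_def q_def by blast
  have ml: "multilinear k (hderiv k F q)" for k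
    using assms real_analytic_on_hderiv_differentiable multilinear_hderiv unfolding q_def by blast
  have nv: "0 < norm v + 1" by (simp add: add_nonneg_pos)
  show "\<exists>r>0. \<forall>s. \<bar>s - t\<bar> < r \<longrightarrow> (\<lambda>k. hderiv k F (p + t *\<^sub>R v) (replicate k v) $ i / fact k * (s - t) ^ k)
          sums hderiv 0 F (p + s *\<^sub>R v) (replicate 0 v) $ i"
  proof (intro exI[of _ "r / (norm v + 1)"] conjI allI impI)
    show "r / (norm v + 1) > 0" using r(1) nv by simp
    fix s
    assume s: "\<bar>s - t\<bar> < r / (norm v + 1)"
    have yq: "(p + s *\<^sub>R v) - q = (s - t) *\<^sub>R v" by (simp add: q_def algebra_simps)
    have "\<bar>s - t\<bar> * norm v < r"
      using s nv by (smt (verit) mult_left_mono pos_less_divide_eq abs_ge_zero norm_ge_zero)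
    then have "dist (p + s *\<^sub>R v) q < r" by (simp add: dist_norm yq)
    then have "p + s *\<^sub>R v \<in> ball q r" by (simp add: dist_commute)
    from r(2)[OF this]
    have "(\<lambda>k. ((s - t) ^ k / fact k) *\<^sub>R hderiv k F q (replicate k v)) sums F (p + s *\<^sub>R v)"
      unfolding yq using multilinear_replicate_scale[OF ml] by (simp add: divide_inverse_commute)
    from bounded_linear.sums[OF bounded_linear_vec_nth this, of i]
    show "(\<lambda>k. hderiv k F (p + t *\<^sub>R v) (replicate k v) $ i / fact k * (s - t) ^ k)
          sums hderiv 0 F (p + s *\<^sub>R v) (replicate 0 v) $ i"
      by (simp add: q_def mult_ac)
  qed
qed

lemma real_analytic_taylor_series_sums:
  fixes F :: "real^'n \<Rightarrow> real^'n"
  assumes \<Omega>: "open \<Omega>" and an: "real_analytic_on F \<Omega>"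
    and R: "ball xs R \<subseteq> \<Omega>" "norm v < R"
    and \<rho>: "\<rho> > 1" "summable (\<lambda>k. norm (hderiv k F xs (replicate k v) /\<^sub>R fact k) * \<rho> ^ k)"
  shows "(\<lambda>k. hderiv k F xs (replicate k v) /\<^sub>R fact k) sums F (xs + v)"
proof (rule sums_vec)
  fix i
  define f where "f = (\<lambda>k t. hderiv k F (xs + t *\<^sub>R v) (replicate k v) $ i)"
  define U where "U = {t::real. xs + t *\<^sub>R v \<in> ball xs R}"
  have "open U" unfolding U_def
    by (intro open_vimage[of "ball xs R" "\<lambda>t. xs + t *\<^sub>R v", unfolded vimage_def] continuous_intros) simp
  moreover have U01: "{0..1} \<subseteq> U"
  proof
    fix t :: real
    assume "t \<in> {0..1}"
    then have "norm (t *\<^sub>R v) \<le> norm v" by (auto intro: mult_left_le_one_le)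
    then show "t \<in> U" using R(2) by (simp add: U_def dist_norm)
  qed
  moreover have UO: "xs + t *\<^sub>R v \<in> \<Omega>" if "t \<in> U" for t using R(1) that by (auto simp: U_def)
  moreover have "(f k has_real_derivative f (Suc k) t) (at t)" if "t \<in> U" for k t
  proof -
    have "((\<lambda>t. hderiv k F (xs + t *\<^sub>R v) (replicate k v)) has_vector_derivative
          hderiv (Suc k) F (xs + t *\<^sub>R v) (v # replicate k v)) (at t)"
      by (rule has_vector_derivative_hderiv_line[OF real_analytic_on_hderiv_differentiable[OF an] UO[OF that]])
    from bounded_linear.has_vector_derivative[OF bounded_linear_vec_nth this, of i]
    show ?thesis unfolding f_def by (simp add: has_real_derivative_iff_has_vector_derivative)
  qed
  moreover have "has_taylor_expansion_at f t" if "t \<in> {0..1}" for t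
    unfolding f_def using U01 that by (intro hderiv_line_has_taylor_expansion[OF \<Omega> an UO]) auto
  moreover have "summable (\<lambda>k. \<bar>f k 0 / fact k\<bar> * \<rho> ^ k)"
  proof (rule summable_comparison_test[OF _ \<rho>(2)], intro exI allI impI)
    fix k
    have "\<bar>f k 0 / fact k\<bar> = \<bar>(hderiv k F xs (replicate k v) /\<^sub>R fact k) $ i\<bar>"
      by (simp add: f_def abs_mult divide_inverse_commute)
    also have "\<dots> \<le> norm (hderiv k F xs (replicate k v) /\<^sub>R fact k)" by (rule component_le_norm_cart)
    finally have "\<bar>f k 0 / fact k\<bar> * \<rho> ^ k \<le> norm (hderiv k F xs (replicate k v) /\<^sub>R fact k) * \<rho> ^ k"
      using \<rho>(1) by (intro mult_right_mono) auto
    moreover have "norm (\<bar>f k 0 / fact k\<bar> * \<rho> ^ k) = \<bar>f k 0 / fact k\<bar> * \<rho> ^ k"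
      using \<rho>(1) by simp
    ultimately show "norm (\<bar>f k 0 / fact k\<bar> * \<rho> ^ k) \<le> norm (hderiv k F xs (replicate k v) /\<^sub>R fact k) * \<rho> ^ k"
      by simp
  qed
  ultimately have "(\<lambda>k. f k 0 / fact k * 1 ^ k) sums f 0 1"
    using \<rho>(1) by (intro taylor_series_sums_on_unit_interval[where U=U]) auto
  then show "(\<lambda>k. (hderiv k F xs (replicate k v) /\<^sub>R fact k) $ i) sums (F (xs + v) $ i)"
    by (simp add: f_def divide_inverse_commute)
qed

section \<open>Difference quotients and the \<open>\<gamma>\<close>-majorant\<close>

lemma sums_norm_le:
  fixes d :: "nat \<Rightarrow> 'a::banach"
  assumes "d sums D" "b sums B" "\<And>k. norm (d k) \<le> b k"
  shows "norm D \<le> B"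
proof -
  have sb: "summable b" using assms(2) by (simp add: sums_summable)
  have sn: "summable (\<lambda>k. norm (d k))"
    by (rule summable_comparison_test[OF _ sb]) (use assms(3) in auto)
  have "norm D = norm (suminf d)" using assms(1) by (metis sums_unique)
  also have "\<dots> \<le> (\<Sum>k. norm (d k))" by (rule summable_norm[OF sn])
  also have "\<dots> \<le> suminf b" by (rule suminf_le[OF assms(3) sn sb])
  also have "\<dots> = B" using assms(2) by (metis sums_unique)
  finally show ?thesis .
qed

lemma difference_quotient_tendsto:
  fixes F :: "'a::real_normed_vector \<Rightarrow> 'b::real_normed_vector"
  assumes "(F has_derivative F') (at x)"
  shows "((\<lambda>s. (F (x + s *\<^sub>R h) - F x) /\<^sub>R s) \<longlongrightarrow> F' h) (at_right 0)"
proof -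
  define g where "g = (\<lambda>s::real. F (x + s *\<^sub>R h))"
  have "((\<lambda>s. x + s *\<^sub>R h) has_derivative (\<lambda>s. s *\<^sub>R h)) (at 0)"
    by (auto intro!: derivative_eq_intros)
  from has_derivative_compose[OF this] assms
  have "(g has_derivative (\<lambda>s. F' (s *\<^sub>R h))) (at 0)" unfolding g_def by (simp add: o_def)
  then have "(g has_derivative (\<lambda>s. s *\<^sub>R F' h)) (at 0)"
    using assms by (simp add: linear_scale has_derivative_linear)
  then have "((\<lambda>y. ((g y - g 0) - y *\<^sub>R F' h) /\<^sub>R norm y) \<longlongrightarrow> 0) (at_right 0)"
    unfolding has_derivative_at_within by (auto intro: tendsto_mono[OF at_within_le_at])
  then have "((\<lambda>y. F' h + ((g y - g 0) - y *\<^sub>R F' h) /\<^sub>R norm y) \<longlongrightarrow> F' h) (at_right 0)"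
    using tendsto_add[OF tendsto_const] by fastforce
  moreover have "\<forall>\<^sub>F y in at_right 0. F' h + ((g y - g 0) - y *\<^sub>R F' h) /\<^sub>R norm y = (F (x + y *\<^sub>R h) - F x) /\<^sub>R y"
    using eventually_at_right_less[of 0] by eventually_elim (simp add: g_def algebra_simps)
  ultimately show ?thesis by (simp add: tendsto_cong)
qed

lemma derivative_bound_from_difference_quotients:
  fixes F :: "'a::real_normed_vector \<Rightarrow> 'b::real_normed_vector"
  assumes "(F has_derivative F') (at x)" "bounded_linear L"
    and "(b \<longlongrightarrow> B) (at_right 0)"
    and "\<forall>\<^sub>F s in at_right 0. norm (L ((F (x + s *\<^sub>R h) - F x) /\<^sub>R s) - w) \<le> b s"
  shows "norm (L (F' h) - w) \<le> B"
proof -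
  have "((\<lambda>s. L ((F (x + s *\<^sub>R h) - F x) /\<^sub>R s) - w) \<longlongrightarrow> L (F' h) - w) (at_right 0)"
    by (intro tendsto_diff tendsto_const bounded_linear.tendsto[OF assms(2)] difference_quotient_tendsto assms(1))
  from tendsto_le[OF trivial_limit_at_right_real assms(3) tendsto_norm[OF this] assms(4)]
  show ?thesis .
qed

text \<open>Under the \<open>\<gamma>\<close>-condition the \<open>k\<close>-th term of \<open>gamma_series \<gamma> \<parallel>w\<parallel>\<close> bounds the normalized Taylor
  term \<open>\<parallel>F'(x\<^sub>*)\<^sup>-\<^sup>1F\<^sup>(\<^sup>k\<^sup>)(x\<^sub>*)w\<^sup>k/k!\<parallel>\<close> for \<open>k \<ge> 2\<close>; the terms \<open>k < 2\<close> cancel in all uses.\<close>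

definition gamma_series :: "real \<Rightarrow> real \<Rightarrow> nat \<Rightarrow> real" where
  "gamma_series \<gamma> r k = (if k < 2 then 0 else \<gamma> ^ (k - 1) * r ^ k)"

definition gamma_majorant :: "real \<Rightarrow> real \<Rightarrow> real" where
  "gamma_majorant \<gamma> r = \<gamma> * r\<^sup>2 / (1 - \<gamma> * r)"

lemma gamma_series_sums:
  assumes "\<bar>\<gamma> * r\<bar> < 1"
  shows "gamma_series \<gamma> r sums gamma_majorant \<gamma> r"
proof -
  have "(\<lambda>k. (\<gamma> * r\<^sup>2) * (\<gamma> * r) ^ k) sums ((\<gamma> * r\<^sup>2) * (1 / (1 - \<gamma> * r)))"
    using geometric_sums[of "\<gamma> * r"] assms by (intro sums_mult) simp
  moreover have "(\<gamma> * r\<^sup>2) * (\<gamma> * r) ^ k = gamma_series \<gamma> r (Suc (Suc k))" for k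
    by (simp add: gamma_series_def power2_eq_square power_mult_distrib algebra_simps)
  ultimately have "(\<lambda>k. gamma_series \<gamma> r (Suc (Suc k))) sums gamma_majorant \<gamma> r"
    by (simp add: gamma_majorant_def)
  then show ?thesis
    using sums_Suc_iff[of "\<lambda>k. gamma_series \<gamma> r (Suc k)"] sums_Suc_iff[of "gamma_series \<gamma> r"]
    by (simp add: gamma_series_def)
qed

lemma gamma_majorant_difference_quotient_tendsto:
  assumes "\<gamma> * r < 1"
  shows "((\<lambda>s. (gamma_majorant \<gamma> (r + s * c) - gamma_majorant \<gamma> r) / s)
          \<longlongrightarrow> (1 / (1 - \<gamma> * r)\<^sup>2 - 1) * c) (at_right 0)"
proof -
  have ne: "1 - \<gamma> * r \<noteq> 0" using assms by simp
  have "(gamma_majorant \<gamma> has_real_derivative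
      ((\<gamma> * (2 * r)) * (1 - \<gamma> * r) - \<gamma> * r\<^sup>2 * (- \<gamma>)) / (1 - \<gamma> * r)\<^sup>2) (at r)"
    unfolding gamma_majorant_def using ne by (auto intro!: derivative_eq_intros simp: power2_eq_square)
  moreover have "((\<gamma> * (2 * r)) * (1 - \<gamma> * r) - \<gamma> * r\<^sup>2 * (- \<gamma>)) / (1 - \<gamma> * r)\<^sup>2 = 1 / (1 - \<gamma> * r)\<^sup>2 - 1"
  proof -
    have "(\<gamma> * (2 * r)) * (1 - \<gamma> * r) - \<gamma> * r\<^sup>2 * (- \<gamma>) = 1 - (1 - \<gamma> * r)\<^sup>2"
      by (simp add: power2_eq_square algebra_simps)
    moreover have "1 / (1 - \<gamma> * r)\<^sup>2 - 1 = (1 - (1 - \<gamma> * r)\<^sup>2) / (1 - \<gamma> * r)\<^sup>2"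
      using ne by (simp add: diff_divide_distrib)
    ultimately show ?thesis by simp
  qed
  ultimately have "(gamma_majorant \<gamma> has_real_derivative 1 / (1 - \<gamma> * r)\<^sup>2 - 1) (at (r + 0 * c))"
    by simp
  moreover have "((\<lambda>s. r + s * c) has_real_derivative c) (at 0)"
    by (auto intro!: derivative_eq_intros)
  ultimately have "((\<lambda>s. gamma_majorant \<gamma> (r + s * c)) has_real_derivative (1 / (1 - \<gamma> * r)\<^sup>2 - 1) * c) (at 0)"
    by (rule DERIV_chain2)
  then show ?thesis unfolding DERIV_def by (auto intro: tendsto_mono[OF at_within_le_at])
qed

section \<open>Inexact Newton steps and the CondG procedure\<close>

lemma preconditioned_residual_bound:
  fixes J P :: "real^'n^'n"
  assumes invJ: "invertible J" and invP: "invertible P"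
    and res: "norm (P *v r) \<le> \<eta> * norm (P *v Fx)"
    and eta: "\<eta> * cond (P ** J) \<le> vt" and vt: "0 \<le> vt"
  shows "norm (matrix_inv J *v r) \<le> vt * norm (matrix_inv J *v Fx)"
proof -
  define K where "K = P ** J"
  define w where "w = matrix_inv J *v r"
  define g where "g = matrix_inv J *v Fx"
  have invK: "invertible K" unfolding K_def by (rule invertible_mult[OF invP invJ])
  have "K *v w = P *v r" "K *v g = P *v Fx"
    by (simp_all add: K_def w_def g_def matrix_inv_mult_vector(1)[OF invJ] flip: matrix_vector_mul_assoc)
  then have w: "norm w \<le> opnorm (matrix_inv K) * norm (P *v r)"
    and PF: "norm (P *v Fx) \<le> opnorm K * norm g"
    using matrix_inv_mult_vector(2)[OF invK, of w] norm_mult_vector_le_opnorm by metis+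
  show ?thesis
  proof (cases "0 \<le> \<eta>")
    case True
    have "norm w \<le> opnorm (matrix_inv K) * (\<eta> * (opnorm K * norm g))"
      using w res PF True opnorm_nonneg[of "matrix_inv K"]
      by (smt (verit) mult_left_mono)
    also have "\<dots> = (\<eta> * cond K) * norm g" by (simp add: cond_def mult_ac)
    also have "\<dots> \<le> vt * norm g" using eta by (intro mult_right_mono) (auto simp: K_def)
    finally show ?thesis by (simp add: w_def g_def)
  next
    case False
    then have "P *v r = 0" using res by (smt (verit) mult_nonpos_nonneg norm_ge_zero norm_le_zero_iff)
    then show ?thesis using w vt by (simp add: w_def g_def)
  qed
qed

text \<open>Here \<open>e\<close> is the current error and \<open>N\<close> bounds the error of the exact Newton direction
  \<open>J\<^sup>-\<^sup>1 F x\<close> relative to \<open>e\<close>.\<close>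

lemma inexact_newton_step_bound:
  fixes J M P :: "real^'n^'n"
  assumes invJ: "invertible J" and N: "norm (matrix_inv J *v Fx - e) \<le> N"
    and invM: "invertible M" and step: "M *v s = - Fx + r"
    and M1: "opnorm (matrix_inv M ** J) \<le> \<omega>1" and M2: "opnorm (matrix_inv M ** J - mat 1) \<le> \<omega>2"
    and invP: "invertible P" and res: "norm (P *v r) \<le> \<eta> * norm (P *v Fx)"
    and eta: "\<eta> * cond (P ** J) \<le> vt" and vt: "0 \<le> vt"
  shows "norm s \<le> \<omega>1 * (1 + vt) * (norm e + N)"
    and "norm (e + s) \<le> \<omega>2 * norm e + \<omega>1 * N + \<omega>1 * vt * (norm e + N)"
proof -
  define B where "B = matrix_inv M ** J"
  define g where "g = matrix_inv J *v Fx"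
  define w where "w = matrix_inv J *v r"
  have \<omega>1: "0 \<le> \<omega>1" using M1 opnorm_nonneg[of "matrix_inv M ** J"] by linarith
  have B1: "norm (B *v v) \<le> \<omega>1 * norm v" for v
    using M1 norm_mult_vector_le unfolding B_def by blast
  have B2: "norm (B *v v - v) \<le> \<omega>2 * norm v" for v
    using M2 norm_mult_vector_le[of "B - mat 1"] unfolding B_def
    by (simp add: matrix_vector_mult_diff_rdistrib)
  have g: "norm g \<le> norm e + N"
    using N norm_triangle_ineq[of "g - e" e] unfolding g_def by simp
  have w: "norm w \<le> vt * (norm e + N)"
    using preconditioned_residual_bound[OF invJ invP res eta vt] g vt unfolding w_def g_def
    by (meson mult_left_mono order_trans)
  have s: "s = - (B *v g) + B *v w"
  proof -
    have "s = matrix_inv M *v (M *v s)" by (rule matrix_inv_mult_vector(2)[OF invM, symmetric])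
    then show ?thesis
      by (simp add: step B_def g_def w_def matrix_vector_mult_diff_distrib linear_neg[OF matrix_vector_mul_linear]
          matrix_inv_mult_vector(1)[OF invJ] flip: matrix_vector_mul_assoc)
  qed
  have "norm s \<le> norm (B *v g) + norm (B *v w)"
    unfolding s by (metis norm_minus_cancel norm_triangle_ineq)
  also have "\<dots> \<le> \<omega>1 * (norm e + N) + \<omega>1 * (vt * (norm e + N))"
    using B1[of g] B1[of w] g w \<omega>1 by (smt (verit) mult_left_mono)
  finally show "norm s \<le> \<omega>1 * (1 + vt) * (norm e + N)" by (simp add: algebra_simps)
  have "e + s = - (B *v e - e) + B *v (e - g) + B *v w"
    by (simp add: s matrix_vector_mult_diff_distrib algebra_simps)
  then have "norm (e + s) \<le> norm (B *v e - e) + norm (B *v (e - g)) + norm (B *v w)"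
    by (metis norm_minus_cancel norm_triangle_ineq norm_triangle_le add_mono order_refl)
  moreover have "norm (B *v (e - g)) \<le> \<omega>1 * N"
    using B1[of "e - g"] N \<omega>1 unfolding g_def by (smt (verit) mult_left_mono norm_minus_commute)
  moreover have "norm (B *v w) \<le> \<omega>1 * (vt * (norm e + N))"
    using B1[of w] w \<omega>1 by (smt (verit) mult_left_mono)
  ultimately show "norm (e + s) \<le> \<omega>2 * norm e + \<omega>1 * N + \<omega>1 * vt * (norm e + N)"
    using B2[of e] by (simp add: algebra_simps)
qed

lemma condg_run_in_set:
  assumes "condg_run C y \<epsilon> z w" "convex C" "0 \<le> \<epsilon>" "z \<in> C"
  shows "w \<in> C \<and> - \<epsilon> \<le> gmin C y w"
  using assms
proof (induction rule: condg_run.induct)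
  case (stop z)
  then show ?case by simp
next
  case (step u z \<alpha> w)
  have "gmin C y z / (norm (u - z))\<^sup>2 \<le> 0"
    using step.hyps(3) step.prems(2) by (intro divide_nonpos_nonneg) auto
  then have "0 \<le> \<alpha>" "\<alpha> \<le> 1" using step.hyps(4) by auto
  then have "(1 - \<alpha>) *\<^sub>R z + \<alpha> *\<^sub>R u \<in> C"
    using step.prems(1,3) step.hyps(1) unfolding convex_def by auto
  moreover have "z + \<alpha> *\<^sub>R (u - z) = (1 - \<alpha>) *\<^sub>R z + \<alpha> *\<^sub>R u" by (simp add: algebra_simps)
  ultimately show ?case using step.IH step.prems by simp
qed

lemma gmin_stationary_dist_le:
  fixes C :: "'a::real_inner set"
  assumes "w \<in> C" "- \<epsilon> \<le> gmin C y w" "compact C" "p \<in> C" "0 \<le> \<epsilon>"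
  shows "norm (w - p) \<le> norm (y - p) + sqrt \<epsilon>"
proof -
  have "bdd_below ((\<lambda>u. inner (w - y) (u - w)) ` C)"
    using assms(3) by (intro bounded_imp_bdd_below compact_imp_bounded compact_continuous_image)
      (auto intro!: continuous_intros)
  moreover have "{inner (w - y) (u - w) | u. u \<in> C} = (\<lambda>u. inner (w - y) (u - w)) ` C" by auto
  ultimately have "gmin C y w \<le> inner (w - y) (p - w)"
    unfolding gmin_def using assms(4) by (intro cInf_lower) auto
  then have i: "inner (w - y) (w - p) \<le> \<epsilon>" using assms(2) by (simp add: inner_diff_right)
  define d where "d = norm (w - p)"
  define a where "a = norm (y - p)"
  have "d\<^sup>2 = inner (w - y) (w - p) + inner (y - p) (w - p)"
    by (simp add: d_def power2_norm_eq_inner inner_diff_left inner_diff_right algebra_simps)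
  also have "\<dots> \<le> \<epsilon> + a * d"
    using i norm_cauchy_schwarz[of "y - p" "w - p"] by (simp add: a_def d_def)
  finally have q: "d\<^sup>2 \<le> \<epsilon> + a * d" .
  show ?thesis
  proof (rule ccontr)
    assume "\<not> ?thesis"
    then have gt: "a + sqrt \<epsilon> < d" by (simp add: d_def a_def)
    have "0 \<le> sqrt \<epsilon>" "0 \<le> a" using assms(5) by (simp_all add: a_def)
    then have "0 < d" using gt by linarith
    have "d * (a + sqrt \<epsilon>) < d * d" using gt \<open>0 < d\<close> by simp
    moreover have "sqrt \<epsilon> * sqrt \<epsilon> \<le> d * sqrt \<epsilon>"
      using gt \<open>0 \<le> a\<close> \<open>0 \<le> sqrt \<epsilon>\<close> by (intro mult_right_mono) auto
    ultimately have "\<epsilon> + a * d < d\<^sup>2" using assms(5) by (simp add: power2_eq_square algebra_simps)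
    then show False using q by simp
  qed
qed

lemma condg_output_dist_le:
  assumes "CondG_out C y x \<epsilon> z" "convex C" "compact C" "x \<in> C" "p \<in> C" "0 \<le> \<epsilon>"
  shows "z \<in> C" "norm (z - p) \<le> norm (y - p) + sqrt \<epsilon>"
  using condg_run_in_set[OF assms(1)[unfolded CondG_out_def] assms(2,6,4)]
    gmin_stationary_dist_le[OF _ _ assms(3,5,6)] by auto

lemma below_smaller_root:
  fixes a b u :: real
  assumes b: "0 < b" and ab: "0 < a - 4 * b"
    and u: "0 \<le> u" "u < (a - sqrt (a\<^sup>2 - 8 * b\<^sup>2)) / (4 * b)"
  shows "1 < 2 * (1 - u)\<^sup>2" "(a - 4 * b) * u < b * (2 * (1 - u)\<^sup>2 - 1)"
proof -
  have "(4 * b)\<^sup>2 \<le> a\<^sup>2" using ab b by (intro power_mono) auto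
  then have "16 * b\<^sup>2 \<le> a\<^sup>2" by (simp add: power_mult_distrib)
  then have d0: "0 \<le> a\<^sup>2 - 8 * b\<^sup>2" using zero_le_power2[of b] by linarith
  define sq where "sq = sqrt (a\<^sup>2 - 8 * b\<^sup>2)"
  have sq: "0 \<le> sq" "sq\<^sup>2 = a\<^sup>2 - 8 * b\<^sup>2" using d0 by (simp_all add: sq_def)
  define r1 where "r1 = (a - sq) / (4 * b)"
  define r2 where "r2 = (a + sq) / (4 * b)"
  text \<open>\<open>r1, r2\<close> are the roots of \<open>2 b u\<^sup>2 - a u + b\<close>, and \<open>u\<close> lies below both.\<close>
  have "u < r1" using u by (simp add: r1_def sq_def)
  moreover have "r1 \<le> r2" using sq(1) b by (simp add: r1_def r2_def divide_right_mono)
  ultimately have "0 < (u - r1) * (u - r2)" by (intro mult_neg_neg) auto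
  also have "(u - r1) * (u - r2) = u\<^sup>2 - u * (a / (2 * b)) + (a\<^sup>2 - sq\<^sup>2) / (16 * b\<^sup>2)"
    using b by (simp add: r1_def r2_def field_simps power2_eq_square)
  also have "(a\<^sup>2 - sq\<^sup>2) / (16 * b\<^sup>2) = 1 / 2" using b by (simp add: sq(2) field_simps)
  finally have "0 < 2 * b * (u\<^sup>2 - u * (a / (2 * b)) + 1 / 2)" using b by simp
  also have "2 * b * (u\<^sup>2 - u * (a / (2 * b)) + 1 / 2) = 2 * b * u\<^sup>2 - a * u + b"
    using b by (simp add: algebra_simps)
  finally have "0 < 2 * b * u\<^sup>2 - a * u + b" .
  moreover have "b * (2 * (1 - u)\<^sup>2 - 1) - (a - 4 * b) * u = 2 * b * u\<^sup>2 - a * u + b"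
    by (simp add: power2_eq_square algebra_simps)
  ultimately show c2: "(a - 4 * b) * u < b * (2 * (1 - u)\<^sup>2 - 1)" by linarith
  moreover have "0 \<le> (a - 4 * b) * u" using ab u by simp
  ultimately have "0 < b * (2 * (1 - u)\<^sup>2 - 1)" by linarith
  then show "1 < 2 * (1 - u)\<^sup>2" using b by (simp add: zero_less_mult_iff)
qed

lemma Sup_root_bound:
  fixes f :: "nat \<Rightarrow> real"
  assumes bdd: "bdd_above {f n powr (1 / (real n - 1)) | n. n > 1}"
    and nonneg: "\<And>n. 0 \<le> f n"
    and \<gamma>: "\<gamma> = Sup {f n powr (1 / (real n - 1)) | n. n > 1}"
  shows "0 \<le> \<gamma>" and "2 \<le> k \<Longrightarrow> f k \<le> \<gamma> ^ (k - 1)"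
proof -
  have le: "f n powr (1 / (real n - 1)) \<le> \<gamma>" if "1 < n" for n
    unfolding \<gamma> by (rule cSup_upper[OF _ bdd]) (use that in blast)
  then show "0 \<le> \<gamma>" using powr_ge_zero[of "f 2"] by (meson less_numeral_extra(1) one_less_numeral_iff order_trans semiring_norm(76))
  assume k: "2 \<le> k"
  show "f k \<le> \<gamma> ^ (k - 1)"
  proof (cases "f k = 0")
    case True
    then show ?thesis using \<open>0 \<le> \<gamma>\<close> by simp
  next
    case False
    then have pos: "0 < f k" using nonneg[of k] by simp
    have "f k = (f k powr (1 / (real k - 1))) powr (real (k - 1))"
      using k pos by (simp add: powr_powr of_nat_diff)
    also have "\<dots> = (f k powr (1 / (real k - 1))) ^ (k - 1)" using pos by (simp add: powr_realpow)
    also have "\<dots> \<le> \<gamma> ^ (k - 1)" using le[of k] k by (intro power_mono) auto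
    finally show ?thesis .
  qed
qed

lemma mlnorm_nonneg:
  assumes "open \<Omega>" "hderiv_differentiable_on F \<Omega>" "x \<in> \<Omega>"
  shows "0 \<le> mlnorm A k F x"
proof -
  have "linear (\<lambda>u. A *v (u /\<^sub>R fact k))"
    by (rule bounded_linear.linear[OF bounded_linear_compose[OF matrix_vector_mul_bounded_linear
        bounded_linear_scaleR_right]])
  from multinorm_nonneg[OF multilinear_compose[OF multilinear_hderiv[OF assms] this]]
  show ?thesis by (simp add: multinorm_def mlnorm_def)
qed

section \<open>Estimates under Smale's \<open>\<gamma>\<close>-condition\<close>

locale gamma_bounded =
  fixes F :: "real^'n \<Rightarrow> real^'n" and \<Omega> :: "(real^'n) set" and xs :: "real^'n" and \<gamma> R :: real
  assumes open_domain: "open \<Omega>"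
    and analytic: "real_analytic_on F \<Omega>"
    and root: "F xs = 0"
    and jac_invertible: "invertible (jac F xs)"
    and gamma_nonneg: "0 \<le> \<gamma>"
    and mlnorm_le: "\<And>k. 2 \<le> k \<Longrightarrow> mlnorm (matrix_inv (jac F xs)) k F xs \<le> \<gamma> ^ (k - 1)"
    and ball_subset: "ball xs R \<subseteq> \<Omega>"
    and radius_pos: "0 < R"
    and radius_le: "\<gamma> * R \<le> 1"
begin

lemma xs_in_domain: "xs \<in> \<Omega>"
  using ball_subset radius_pos by auto

lemma differentiable_in_ball:
  assumes "norm (x - xs) < R"
  shows "F differentiable (at x)"
proof -
  have "x \<in> \<Omega>" using assms ball_subset by (auto simp: dist_norm norm_minus_commute)
  then have "(\<lambda>y. hderiv 0 F y []) differentiable (at x)"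
    using real_analytic_on_hderiv_differentiable[OF analytic]
    unfolding hderiv_differentiable_on_def by blast
  then show ?thesis by simp
qed

lemma gamma_radius:
  assumes "0 \<le> r" "r < R"
  shows "\<bar>\<gamma> * r\<bar> < 1"
proof (cases "\<gamma> = 0")
  case False
  then have "\<gamma> * r < \<gamma> * R" using assms gamma_nonneg by simp
  then show ?thesis using assms gamma_nonneg radius_le by simp
qed simp

definition normalized_deriv :: "nat \<Rightarrow> (real^'n) list \<Rightarrow> real^'n" where
  "normalized_deriv k hs = matrix_inv (jac F xs) *v (hderiv k F xs hs /\<^sub>R fact k)"

lemma multilinear_normalized_deriv: "multilinear k (normalized_deriv k)"
proof -
  have "linear (\<lambda>u. matrix_inv (jac F xs) *v (u /\<^sub>R fact k))"
    by (rule bounded_linear.linear[OF bounded_linear_compose[OF matrix_vector_mul_bounded_linear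
        bounded_linear_scaleR_right]])
  from multilinear_compose[OF multilinear_hderiv[OF open_domain
      real_analytic_on_hderiv_differentiable[OF analytic] xs_in_domain] this]
  show ?thesis unfolding normalized_deriv_def[abs_def] by simp
qed

lemma norm_normalized_deriv_le:
  assumes "2 \<le> k" "length hs = k"
  shows "norm (normalized_deriv k hs) \<le> \<gamma> ^ (k - 1) * prod_list (map norm hs)"
proof -
  have "multinorm k (normalized_deriv k) = mlnorm (matrix_inv (jac F xs)) k F xs"
    unfolding multinorm_def mlnorm_def normalized_deriv_def by simp
  then have "multinorm k (normalized_deriv k) \<le> \<gamma> ^ (k - 1)" using mlnorm_le[OF assms(1)] by simp
  moreover have "0 \<le> prod_list (map norm hs)" by (rule prod_list_nonneg) auto
  ultimately have "multinorm k (normalized_deriv k) * prod_list (map norm hs) \<le> \<gamma> ^ (k - 1) * prod_list (map norm hs)"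
    by (rule mult_right_mono)
  with multinorm_bound[OF multilinear_normalized_deriv assms(2)] show ?thesis by linarith
qed

lemma normalized_deriv_0: "normalized_deriv 0 hs = 0"
  by (simp add: normalized_deriv_def root)

lemma normalized_deriv_1: "normalized_deriv (Suc 0) [w] = w"
proof -
  have "hderiv 1 F xs [w] = jac F xs *v w"
    using jac_mult_vector[OF differentiable_in_ball] radius_pos by simp
  then show ?thesis by (simp add: normalized_deriv_def matrix_inv_mult_vector(2)[OF jac_invertible])
qed

lemma normalized_term_le:
  "2 \<le> k \<Longrightarrow> norm (normalized_deriv k (replicate k w)) \<le> gamma_series \<gamma> (norm w) k"
  using norm_normalized_deriv_le[of k "replicate k w"] by (simp add: gamma_series_def prod_list_replicate)

lemma normalized_term_diff_le:
  "norm (normalized_deriv k (replicate k a) - normalized_deriv k (replicate k e) - (if k = 1 then a - e else 0))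
    \<le> gamma_series \<gamma> (norm e + norm (a - e)) k - gamma_series \<gamma> (norm e) k"
proof (cases "2 \<le> k")
  case True
  have "norm (normalized_deriv k (replicate k a) - normalized_deriv k (replicate k e))
      \<le> \<gamma> ^ (k - 1) * ((norm e + norm (a - e)) ^ k - norm e ^ k)"
    using True gamma_nonneg norm_normalized_deriv_le
    by (intro multilinear_replicate_diff_bound[OF multilinear_normalized_deriv]) auto
  then show ?thesis using True by (simp add: gamma_series_def algebra_simps)
next
  case False
  then consider "k = 0" | "k = 1" by linarith
  then show ?thesis by cases (simp_all add: normalized_deriv_0 normalized_deriv_1 gamma_series_def)
qed

lemma taylor_series_sums:
  assumes "norm w < R"
  shows "(\<lambda>k. normalized_deriv k (replicate k w)) sums (matrix_inv (jac F xs) *v F (xs + w))"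
proof -
  define c where "c = (\<lambda>k. hderiv k F xs (replicate k w) /\<^sub>R fact k)"
  define \<rho> where "\<rho> = 2 / (1 + \<gamma> * norm w)"
  have \<gamma>w: "0 \<le> \<gamma> * norm w" "\<gamma> * norm w < 1"
    using gamma_nonneg gamma_radius[of "norm w"] assms by auto
  then have \<rho>: "1 < \<rho>" "\<bar>\<gamma> * (norm w * \<rho>)\<bar> < 1"
    unfolding \<rho>_def by (simp_all add: field_simps)
  have "summable (\<lambda>k. opnorm (jac F xs) * gamma_series \<gamma> (norm w * \<rho>) k)"
    using gamma_series_sums[OF \<rho>(2)] by (intro summable_mult) (simp add: sums_summable)
  moreover have "norm (norm (c k) * \<rho> ^ k) \<le> opnorm (jac F xs) * gamma_series \<gamma> (norm w * \<rho>) k"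
    if "2 \<le> k" for k
  proof -
    have "norm (c k) = norm (jac F xs *v normalized_deriv k (replicate k w))"
      by (simp add: c_def normalized_deriv_def matrix_inv_mult_vector(1)[OF jac_invertible])
    also have "\<dots> \<le> opnorm (jac F xs) * gamma_series \<gamma> (norm w) k"
      using normalized_term_le[OF that] norm_mult_vector_le[OF order_refl] opnorm_nonneg
      by (smt (verit) mult_left_mono)
    finally have "norm (c k) * \<rho> ^ k \<le> opnorm (jac F xs) * gamma_series \<gamma> (norm w) k * \<rho> ^ k"
      using \<rho>(1) by (simp add: mult_right_mono)
    then show ?thesis using that \<rho>(1) by (simp add: gamma_series_def power_mult_distrib mult_ac)
  qed
  ultimately have "summable (\<lambda>k. norm (c k) * \<rho> ^ k)"
    by (blast intro: summable_comparison_test[where g="\<lambda>k. opnorm (jac F xs) * gamma_series \<gamma> (norm w * \<rho>) k"])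
  then have "c sums F (xs + w)"
    unfolding c_def by (rule real_analytic_taylor_series_sums[OF open_domain analytic ball_subset assms \<rho>(1)])
  from bounded_linear.sums[OF matrix_vector_mul_bounded_linear this]
  show ?thesis by (simp add: c_def normalized_deriv_def)
qed

lemma increment_bound:
  assumes "norm e + norm d < R"
  shows "norm (matrix_inv (jac F xs) *v F (xs + e + d) - matrix_inv (jac F xs) *v F (xs + e) - d)
    \<le> gamma_majorant \<gamma> (norm e + norm d) - gamma_majorant \<gamma> (norm e)"
proof (rule sums_norm_le)
  have e: "norm e < R" using assms norm_ge_zero[of d] by linarith
  moreover have "norm (e + d) < R" using assms norm_triangle_ineq[of e d] by linarith
  ultimately
  have "(\<lambda>k. normalized_deriv k (replicate k (e + d)) - normalized_deriv k (replicate k e)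
      - (if k = 1 then d else 0)) sums
      (matrix_inv (jac F xs) *v F (xs + (e + d)) - matrix_inv (jac F xs) *v F (xs + e) - d)"
    using sums_single[of 1 "\<lambda>_. d"] by (intro sums_diff taylor_series_sums) auto
  then show "(\<lambda>k. normalized_deriv k (replicate k (e + d)) - normalized_deriv k (replicate k e)
      - (if k = 1 then d else 0)) sums
      (matrix_inv (jac F xs) *v F (xs + e + d) - matrix_inv (jac F xs) *v F (xs + e) - d)"
    by (simp add: add.assoc)
  show "(\<lambda>k. gamma_series \<gamma> (norm e + norm d) k - gamma_series \<gamma> (norm e) k) sums
      (gamma_majorant \<gamma> (norm e + norm d) - gamma_majorant \<gamma> (norm e))"
    using assms e by (intro sums_diff gamma_series_sums gamma_radius) auto
  show "norm (normalized_deriv k (replicate k (e + d)) - normalized_deriv k (replicate k e)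
      - (if k = 1 then d else 0)) \<le> gamma_series \<gamma> (norm e + norm d) k - gamma_series \<gamma> (norm e) k" for k
    using normalized_term_diff_le[of k "e + d" e] unfolding add_diff_cancel_left' .
qed

text \<open>Along the ray through \<open>e\<close> the Taylor terms scale by \<open>(1 + s)^k\<close>, so the difference quotient
  minus the value has coefficients \<open>((1 + s)^k - 1)/s - 1 \<ge> 0\<close> and is dominated termwise.\<close>

lemma radial_increment_bound:
  assumes s: "0 < s" "norm e + s * norm e < R"
  shows "norm ((1 / s) *\<^sub>R (matrix_inv (jac F xs) *v F (xs + (1 + s) *\<^sub>R e) - matrix_inv (jac F xs) *v F (xs + e))
      - matrix_inv (jac F xs) *v F (xs + e))
    \<le> (gamma_majorant \<gamma> (norm e + s * norm e) - gamma_majorant \<gamma> (norm e)) / s - gamma_majorant \<gamma> (norm e)"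
proof (rule sums_norm_le)
  define u where "u = (\<lambda>k. normalized_deriv k (replicate k e))"
  define co where "co = (\<lambda>k::nat. ((1 + s) ^ k - 1) / s - 1)"
  have "norm ((1 + s) *\<^sub>R e) = norm e + s * norm e"
    using s by (simp only: norm_scaleR) (simp add: algebra_simps)
  moreover have "norm e \<le> norm e + s * norm e" using s by simp
  ultimately have "norm ((1 + s) *\<^sub>R e) < R" and e: "norm e < R" using s by linarith+
  then have "(\<lambda>k. (1 + s) ^ k *\<^sub>R u k) sums (matrix_inv (jac F xs) *v F (xs + (1 + s) *\<^sub>R e))"
    and "u sums (matrix_inv (jac F xs) *v F (xs + e))"
    using taylor_series_sums[of "(1 + s) *\<^sub>R e"] taylor_series_sums[of e]
    by (simp_all add: u_def multilinear_replicate_scale[OF multilinear_normalized_deriv])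
  then have "(\<lambda>k. (1 / s) *\<^sub>R ((1 + s) ^ k *\<^sub>R u k - u k) - u k) sums
      ((1 / s) *\<^sub>R (matrix_inv (jac F xs) *v F (xs + (1 + s) *\<^sub>R e) - matrix_inv (jac F xs) *v F (xs + e))
      - matrix_inv (jac F xs) *v F (xs + e))"
    by (intro sums_diff sums_scaleR_right)
  moreover have "(1 / s) *\<^sub>R ((1 + s) ^ k *\<^sub>R u k - u k) - u k = co k *\<^sub>R u k" for k
    using s by (simp add: co_def algebra_simps divide_inverse)
  ultimately show "(\<lambda>k. co k *\<^sub>R u k) sums
      ((1 / s) *\<^sub>R (matrix_inv (jac F xs) *v F (xs + (1 + s) *\<^sub>R e) - matrix_inv (jac F xs) *v F (xs + e))
      - matrix_inv (jac F xs) *v F (xs + e))"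
    by simp
  show "(\<lambda>k. (gamma_series \<gamma> (norm e + s * norm e) k - gamma_series \<gamma> (norm e) k) / s - gamma_series \<gamma> (norm e) k)
      sums ((gamma_majorant \<gamma> (norm e + s * norm e) - gamma_majorant \<gamma> (norm e)) / s - gamma_majorant \<gamma> (norm e))"
    using s e by (intro sums_diff sums_divide gamma_series_sums gamma_radius) auto
  show "norm (co k *\<^sub>R u k)
      \<le> (gamma_series \<gamma> (norm e + s * norm e) k - gamma_series \<gamma> (norm e) k) / s - gamma_series \<gamma> (norm e) k" for k
  proof (cases "2 \<le> k")
    case True
    have "1 + real k * s \<le> (1 + s) ^ k" by (rule Bernoulli_inequality) (use s in simp)
    moreover have "s \<le> real k * s" using True s by simp
    ultimately have "1 + s \<le> (1 + s) ^ k" by linarith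
    then have co: "0 \<le> co k" using s by (simp add: co_def field_simps)
    have "gamma_series \<gamma> (norm e + s * norm e) k = (1 + s) ^ k * gamma_series \<gamma> (norm e) k"
    proof -
      have "norm e + s * norm e = (1 + s) * norm e" by (simp add: algebra_simps)
      then show ?thesis using True by (simp add: gamma_series_def power_mult_distrib)
    qed
    then have "(gamma_series \<gamma> (norm e + s * norm e) k - gamma_series \<gamma> (norm e) k) / s - gamma_series \<gamma> (norm e) k
        = co k * gamma_series \<gamma> (norm e) k"
      using s by (simp add: co_def field_simps)
    moreover have "norm (co k *\<^sub>R u k) \<le> co k * gamma_series \<gamma> (norm e) k"
      using co normalized_term_le[OF True, of e] by (simp add: u_def mult_left_mono)
    ultimately show ?thesis by simp
  next
    case False
    then consider "k = 0" | "k = 1" by linarith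
    then show ?thesis using s by cases (simp_all add: u_def co_def normalized_deriv_0 gamma_series_def)
  qed
qed

lemma has_derivative_jac:
  assumes "norm (x - xs) < R"
  shows "(F has_derivative (\<lambda>h. jac F x *v h)) (at x)"
proof -
  have "frechet_derivative F (at x) = (\<lambda>h. jac F x *v h)"
    using jac_mult_vector[OF differentiable_in_ball[OF assms]] by auto
  then show ?thesis
    using differentiable_in_ball[OF assms] frechet_derivative_works by metis
qed

lemma jacobian_near_identity:
  assumes x: "norm (x - xs) < R"
  shows "norm (matrix_inv (jac F xs) *v (jac F x *v h) - h) \<le> (1 / (1 - \<gamma> * norm (x - xs))\<^sup>2 - 1) * norm h"
proof (rule derivative_bound_from_difference_quotients[where L="\<lambda>v. matrix_inv (jac F xs) *v v"
      and F'="\<lambda>h. jac F x *v h" and h=h and w=h])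
  define \<rho> where "\<rho> = norm (x - xs)"
  show "(F has_derivative (\<lambda>h. jac F x *v h)) (at x)" by (rule has_derivative_jac[OF x])
  show "bounded_linear (\<lambda>v. matrix_inv (jac F xs) *v v)" by (rule matrix_vector_mul_bounded_linear)
  have "\<gamma> * \<rho> < 1" using gamma_radius[of \<rho>] x by (simp add: \<rho>_def)
  then show "((\<lambda>s. (gamma_majorant \<gamma> (\<rho> + s * norm h) - gamma_majorant \<gamma> \<rho>) / s)
      \<longlongrightarrow> (1 / (1 - \<gamma> * norm (x - xs))\<^sup>2 - 1) * norm h) (at_right 0)"
    unfolding \<rho>_def by (rule gamma_majorant_difference_quotient_tendsto)
  have "norm (matrix_inv (jac F xs) *v ((F (x + s *\<^sub>R h) - F x) /\<^sub>R s) - h)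
      \<le> (gamma_majorant \<gamma> (\<rho> + s * norm h) - gamma_majorant \<gamma> \<rho>) / s"
    if s: "0 < s" "s < (R - \<rho>) / (norm h + 1)" for s
  proof -
    have "s * norm h \<le> s * (norm h + 1)" using s by simp
    also have "\<dots> < R - \<rho>"
      using s(2) pos_less_divide_eq[of "norm h + 1" s "R - \<rho>"] by (simp add: add_nonneg_pos)
    finally have "\<rho> + norm (s *\<^sub>R h) < R" using s by simp
    from increment_bound[OF this[unfolded \<rho>_def]]
    have "norm (matrix_inv (jac F xs) *v F (x + s *\<^sub>R h) - matrix_inv (jac F xs) *v F x - s *\<^sub>R h)
        \<le> gamma_majorant \<gamma> (\<rho> + s * norm h) - gamma_majorant \<gamma> \<rho>"
      using s by (simp add: \<rho>_def)
    moreover have "matrix_inv (jac F xs) *v ((F (x + s *\<^sub>R h) - F x) /\<^sub>R s) - h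
        = (1 / s) *\<^sub>R (matrix_inv (jac F xs) *v F (x + s *\<^sub>R h) - matrix_inv (jac F xs) *v F x - s *\<^sub>R h)"
      using s by (simp add: matrix_vector_mult_diff_distrib matrix_vector_mult_scaleR algebra_simps divide_inverse)
    ultimately show ?thesis using s by (simp add: divide_right_mono)
  qed
  moreover have "0 < (R - \<rho>) / (norm h + 1)" using x by (simp add: \<rho>_def add_nonneg_pos)
  ultimately show "\<forall>\<^sub>F s in at_right 0. norm (matrix_inv (jac F xs) *v ((F (x + s *\<^sub>R h) - F x) /\<^sub>R s) - h)
      \<le> (gamma_majorant \<gamma> (\<rho> + s * norm h) - gamma_majorant \<gamma> \<rho>) / s"
    unfolding eventually_at_right_field by blast
qed

lemma newton_defect_bound:
  assumes x: "norm (x - xs) < R"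
  shows "norm (matrix_inv (jac F xs) *v (jac F x *v (x - xs)) - matrix_inv (jac F xs) *v F x)
    \<le> \<gamma> * (norm (x - xs))\<^sup>2 / (1 - \<gamma> * norm (x - xs))\<^sup>2"
proof -
  define e where "e = x - xs"
  define \<rho> where "\<rho> = norm e"
  have \<gamma>\<rho>: "\<gamma> * \<rho> < 1" using gamma_radius[of \<rho>] x by (simp add: \<rho>_def e_def)
  have "norm (matrix_inv (jac F xs) *v (jac F x *v e) - matrix_inv (jac F xs) *v F x)
      \<le> (1 / (1 - \<gamma> * \<rho>)\<^sup>2 - 1) * \<rho> - gamma_majorant \<gamma> \<rho>"
  proof (rule derivative_bound_from_difference_quotients[where L="\<lambda>v. matrix_inv (jac F xs) *v v"
        and F'="\<lambda>h. jac F x *v h" and h=e and w="matrix_inv (jac F xs) *v F x"])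
    show "(F has_derivative (\<lambda>h. jac F x *v h)) (at x)" by (rule has_derivative_jac[OF x])
    show "bounded_linear (\<lambda>v. matrix_inv (jac F xs) *v v)" by (rule matrix_vector_mul_bounded_linear)
    show "((\<lambda>s. (gamma_majorant \<gamma> (\<rho> + s * \<rho>) - gamma_majorant \<gamma> \<rho>) / s - gamma_majorant \<gamma> \<rho>)
        \<longlongrightarrow> (1 / (1 - \<gamma> * \<rho>)\<^sup>2 - 1) * \<rho> - gamma_majorant \<gamma> \<rho>) (at_right 0)"
      by (intro tendsto_diff tendsto_const gamma_majorant_difference_quotient_tendsto \<gamma>\<rho>)
    have "norm (matrix_inv (jac F xs) *v ((F (x + s *\<^sub>R e) - F x) /\<^sub>R s) - matrix_inv (jac F xs) *v F x)
        \<le> (gamma_majorant \<gamma> (\<rho> + s * \<rho>) - gamma_majorant \<gamma> \<rho>) / s - gamma_majorant \<gamma> \<rho>"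
      if s: "0 < s" "s < (R - \<rho>) / (\<rho> + 1)" for s
    proof -
      have "s * \<rho> \<le> s * (\<rho> + 1)" using s by simp
      also have "\<dots> < R - \<rho>"
        using s(2) pos_less_divide_eq[of "\<rho> + 1" s "R - \<rho>"] by (simp add: \<rho>_def add_nonneg_pos)
      finally have "norm e + s * norm e < R" by (simp add: \<rho>_def)
      from radial_increment_bound[OF s(1) this]
      show ?thesis
        by (simp add: e_def \<rho>_def matrix_vector_mult_diff_distrib matrix_vector_mult_scaleR
            algebra_simps divide_inverse)
    qed
    moreover have "0 < (R - \<rho>) / (\<rho> + 1)" using x by (simp add: \<rho>_def e_def add_nonneg_pos)
    ultimately show "\<forall>\<^sub>F s in at_right 0.
        norm (matrix_inv (jac F xs) *v ((F (x + s *\<^sub>R e) - F x) /\<^sub>R s) - matrix_inv (jac F xs) *v F x)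
        \<le> (gamma_majorant \<gamma> (\<rho> + s * \<rho>) - gamma_majorant \<gamma> \<rho>) / s - gamma_majorant \<gamma> \<rho>"
      unfolding eventually_at_right_field by blast
  qed
  also have "(1 / (1 - \<gamma> * \<rho>)\<^sup>2 - 1) * \<rho> - gamma_majorant \<gamma> \<rho> = \<gamma> * \<rho>\<^sup>2 / (1 - \<gamma> * \<rho>)\<^sup>2"
  proof -
    have t: "1 - \<gamma> * \<rho> \<noteq> 0" using \<gamma>\<rho> by simp
    have "\<And>t a c::real. t \<noteq> 0 \<Longrightarrow> (1 / t\<^sup>2 - 1) * a - c / t = (a - a * t\<^sup>2 - c * t) / t\<^sup>2"
      by (simp add: field_simps power2_eq_square)
    moreover have "\<rho> - \<rho> * (1 - \<gamma> * \<rho>)\<^sup>2 - \<gamma> * \<rho>\<^sup>2 * (1 - \<gamma> * \<rho>) = \<gamma> * \<rho>\<^sup>2"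
      by (simp add: power2_eq_square algebra_simps)
    ultimately show ?thesis using t by (simp add: gamma_majorant_def)
  qed
  finally show ?thesis by (simp add: e_def \<rho>_def)
qed

text \<open>With \<open>q = 1/(1 - \<gamma>\<rho>)^2 - 1 < 1\<close> the Jacobian at \<open>x\<close> is a perturbation of the one at \<open>xs\<close>,
  hence invertible, and it shrinks errors by at most \<open>1 - q\<close>.\<close>

theorem newton_step_error:
  assumes x: "norm (x - xs) < R" "1 < 2 * (1 - \<gamma> * norm (x - xs))\<^sup>2"
  shows "invertible (jac F x)"
    and "norm (matrix_inv (jac F x) *v F x - (x - xs))
      \<le> \<gamma> * (norm (x - xs))\<^sup>2 / (2 * (1 - \<gamma> * norm (x - xs))\<^sup>2 - 1)"
proof -
  define \<rho> where "\<rho> = norm (x - xs)"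
  define q where "q = 1 / (1 - \<gamma> * \<rho>)\<^sup>2 - 1"
  define Ai where "Ai = matrix_inv (jac F xs)"
  have t0: "(1 - \<gamma> * \<rho>)\<^sup>2 > 0" using gamma_radius[of \<rho>] x(1) by (simp add: \<rho>_def)
  have omq: "1 - q = (2 * (1 - \<gamma> * \<rho>)\<^sup>2 - 1) / (1 - \<gamma> * \<rho>)\<^sup>2"
    unfolding q_def using t0 by (simp add: field_simps)
  then have q1: "0 < 1 - q" using x(2) t0 by (simp add: \<rho>_def)
  have low: "(1 - q) * norm h \<le> norm (Ai *v (jac F x *v h))" for h
    using jacobian_near_identity[OF x(1), of h] norm_triangle_ineq2[of h "Ai *v (jac F x *v h)"]
    by (simp add: Ai_def q_def \<rho>_def norm_minus_commute algebra_simps)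
  show invJ: "invertible (jac F x)"
  proof (rule invertible_if_kernel_trivial)
    fix h
    assume "jac F x *v h = 0"
    then have "(1 - q) * norm h \<le> 0" using low[of h] by simp
    then show "h = 0" using q1 by (simp add: mult_le_0_iff)
  qed
  define z where "z = matrix_inv (jac F x) *v F x"
  have "jac F x *v z = F x" unfolding z_def by (rule matrix_inv_mult_vector(1)[OF invJ])
  then have "(1 - q) * norm (z - (x - xs))
      \<le> norm (Ai *v (jac F x *v (x - xs)) - Ai *v F x)"
    using low[of "z - (x - xs)"] by (simp add: matrix_vector_mult_diff_distrib norm_minus_commute)
  also have "\<dots> \<le> \<gamma> * \<rho>\<^sup>2 / (1 - \<gamma> * \<rho>)\<^sup>2"
    using newton_defect_bound[OF x(1)] by (simp add: Ai_def \<rho>_def)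
  finally have "norm (z - (x - xs)) \<le> (\<gamma> * \<rho>\<^sup>2 / (1 - \<gamma> * \<rho>)\<^sup>2) / (1 - q)"
    using q1 by (simp only: pos_le_divide_eq[OF q1] mult.commute)
  also have "\<dots> = \<gamma> * \<rho>\<^sup>2 / (2 * (1 - \<gamma> * \<rho>)\<^sup>2 - 1)"
    unfolding omq using t0 by (simp add: field_simps)
  finally show "norm (matrix_inv (jac F x) *v F x - (x - xs))
      \<le> \<gamma> * (norm (x - xs))\<^sup>2 / (2 * (1 - \<gamma> * norm (x - xs))\<^sup>2 - 1)"
    by (simp add: z_def \<rho>_def)
qed

lemma inl_condg_step:
  fixes M P :: "real^'n^'n"
  assumes x: "x \<in> C" "norm (x - xs) < R" "1 < 2 * (1 - \<gamma> * norm (x - xs))\<^sup>2"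
    and C: "convex C" "compact C" "xs \<in> C"
    and invM: "invertible M" and newton: "M *v s = - F x + r"
    and cg: "CondG_out C (x + s) x (\<theta> * (norm s)\<^sup>2) x'" and \<theta>: "0 \<le> \<theta>"
    and M1: "opnorm (matrix_inv M ** jac F x) \<le> \<omega>1"
    and M2: "opnorm (matrix_inv M ** jac F x - mat 1) \<le> \<omega>2"
    and invP: "invertible P" and res: "norm (P *v r) \<le> \<eta> * norm (P *v F x)"
    and eta: "\<eta> * cond (P ** jac F x) \<le> vt" and vt: "0 \<le> vt"
  shows "x' \<in> C"
    and "norm (x' - xs) \<le> (\<omega>2 + \<omega>1 * vt + sqrt \<theta> * (\<omega>1 * (1 + vt))) * norm (x - xs)
      + (\<omega>1 + \<omega>1 * vt + sqrt \<theta> * (\<omega>1 * (1 + vt)))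
        * (\<gamma> * (norm (x - xs))\<^sup>2 / (2 * (1 - \<gamma> * norm (x - xs))\<^sup>2 - 1))"
proof -
  define e where "e = x - xs"
  define N where "N = \<gamma> * (norm e)\<^sup>2 / (2 * (1 - \<gamma> * norm e)\<^sup>2 - 1)"
  have N: "norm (matrix_inv (jac F x) *v F x - e) \<le> N"
    using newton_step_error(2)[OF x(2,3)] by (simp add: N_def e_def)
  note newton_bounds = inexact_newton_step_bound[OF newton_step_error(1)[OF x(2,3)] N invM newton M1 M2
      invP res eta vt]
  have \<epsilon>: "0 \<le> \<theta> * (norm s)\<^sup>2" using \<theta> by simp
  show "x' \<in> C" by (rule condg_output_dist_le(1)[OF cg C(1,2) x(1) C(3) \<epsilon>])
  have "norm (x' - xs) \<le> norm (x + s - xs) + sqrt (\<theta> * (norm s)\<^sup>2)"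
    by (rule condg_output_dist_le(2)[OF cg C(1,2) x(1) C(3) \<epsilon>])
  also have "\<dots> = norm (e + s) + sqrt \<theta> * norm s"
    by (simp add: e_def real_sqrt_mult algebra_simps)
  also have "\<dots> \<le> (\<omega>2 * norm e + \<omega>1 * N + \<omega>1 * vt * (norm e + N)) + sqrt \<theta> * (\<omega>1 * (1 + vt) * (norm e + N))"
    using newton_bounds \<theta> by (intro add_mono mult_left_mono) auto
  also have "\<dots> = (\<omega>2 + \<omega>1 * vt + sqrt \<theta> * (\<omega>1 * (1 + vt))) * norm e
      + (\<omega>1 + \<omega>1 * vt + sqrt \<theta> * (\<omega>1 * (1 + vt))) * N"
    by (simp add: algebra_simps)
  finally show "norm (x' - xs) \<le> (\<omega>2 + \<omega>1 * vt + sqrt \<theta> * (\<omega>1 * (1 + vt))) * norm (x - xs)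
      + (\<omega>1 + \<omega>1 * vt + sqrt \<theta> * (\<omega>1 * (1 + vt)))
        * (\<gamma> * (norm (x - xs))\<^sup>2 / (2 * (1 - \<gamma> * norm (x - xs))\<^sup>2 - 1))"
    unfolding e_def N_def .
qed

end

section \<open>Convergence of INL-CondG\<close>

lemma limsup_real_bounded:
  fixes \<theta> :: "nat \<Rightarrow> real"
  assumes "\<And>k. 0 \<le> \<theta> k" "\<And>k. \<theta> k \<le> \<Theta>"
  shows "limsup (\<lambda>k. ereal (\<theta> k)) = ereal (real_of_ereal (limsup (\<lambda>k. ereal (\<theta> k))))"
    and "0 \<le> real_of_ereal (limsup (\<lambda>k. ereal (\<theta> k)))"
proof -
  have "0 \<le> limsup (\<lambda>k. ereal (\<theta> k))" by (rule le_Limsup) (use assms in auto)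
  moreover have "limsup (\<lambda>k. ereal (\<theta> k)) \<le> ereal \<Theta>"
    using assms(2) by (intro Limsup_bounded) auto
  ultimately show "limsup (\<lambda>k. ereal (\<theta> k)) = ereal (real_of_ereal (limsup (\<lambda>k. ereal (\<theta> k))))"
    and "0 \<le> real_of_ereal (limsup (\<lambda>k. ereal (\<theta> k)))"
    by (cases "limsup (\<lambda>k. ereal (\<theta> k))"; simp)+
qed

lemma limsup_le_sqrt_limsup:
  fixes r \<rho> \<theta> :: "nat \<Rightarrow> real"
  assumes bnd: "\<And>k. r k \<le> \<alpha> + \<beta> * sqrt (\<theta> k) + K * \<rho> k"
    and \<beta>: "0 \<le> \<beta>" and K: "0 \<le> K" and \<rho>: "\<rho> \<longlonglongrightarrow> 0"
    and \<theta>: "\<And>k. 0 \<le> \<theta> k" "\<And>k. \<theta> k \<le> \<Theta>"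
  shows "limsup (\<lambda>k. ereal (r k)) \<le> ereal (\<alpha> + \<beta> * sqrt (real_of_ereal (limsup (\<lambda>k. ereal (\<theta> k)))))"
proof (rule Limsup_le_iff[THEN iffD2], intro allI impI)
  define t where "t = real_of_ereal (limsup (\<lambda>k. ereal (\<theta> k)))"
  have t: "limsup (\<lambda>k. ereal (\<theta> k)) = ereal t" "0 \<le> t"
    using limsup_real_bounded[OF \<theta>] by (simp_all add: t_def)
  fix y
  assume y: "ereal (\<alpha> + \<beta> * sqrt (real_of_ereal (limsup (\<lambda>k. ereal (\<theta> k))))) < y"
  show "\<forall>\<^sub>F k in sequentially. ereal (r k) < y"
  proof (cases y)
    case (real y')
    define \<epsilon> where "\<epsilon> = y' - (\<alpha> + \<beta> * sqrt t)"
    have \<epsilon>: "0 < \<epsilon>" using y real by (simp add: \<epsilon>_def t_def)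
    define \<delta> where "\<delta> = (\<epsilon> / (2 * (\<beta> + 1)))\<^sup>2"
    have "sqrt \<delta> = \<epsilon> / (2 * (\<beta> + 1))" using \<epsilon> \<beta> by (simp add: \<delta>_def)
    then have "\<beta> * sqrt \<delta> = \<epsilon> / 2 * (\<beta> / (\<beta> + 1))" using \<beta> by (simp add: field_simps)
    also have "\<dots> < \<epsilon> / 2" using \<epsilon> \<beta> by (simp add: field_simps)
    finally have \<delta>: "0 < \<delta>" "\<beta> * sqrt \<delta> < \<epsilon> / 2" using \<epsilon> \<beta> by (simp_all add: \<delta>_def)
    have "\<forall>y>ereal t. \<forall>\<^sub>F k in sequentially. ereal (\<theta> k) < y"
      using Limsup_le_iff[THEN iffD1, OF order_refl[of "limsup (\<lambda>k. ereal (\<theta> k))"]] t by simp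
    then have "\<forall>\<^sub>F k in sequentially. \<theta> k < t + \<delta>"
      using \<delta>(1) by (auto dest: spec[of _ "ereal (t + \<delta>)"])
    moreover have "\<forall>\<^sub>F k in sequentially. \<rho> k < \<epsilon> / (2 * (K + 1))"
      using \<epsilon> K by (intro order_tendstoD(2)[OF \<rho>]) simp
    ultimately show ?thesis
    proof eventually_elim
      case (elim k)
      have "sqrt (\<theta> k) \<le> sqrt t + sqrt \<delta>"
        using elim t(2) \<delta>(1) sqrt_add_le_add_sqrt[of t \<delta>] by (smt (verit) real_sqrt_le_mono)
      then have "\<beta> * sqrt (\<theta> k) \<le> \<beta> * sqrt t + \<beta> * sqrt \<delta>"
        using \<beta> by (simp add: mult_left_mono flip: distrib_left)
      moreover have "K * \<rho> k < \<epsilon> / 2"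
      proof -
        have "K * \<rho> k \<le> K * (\<epsilon> / (2 * (K + 1)))" using elim K by (intro mult_left_mono) auto
        also have "\<dots> < \<epsilon> / 2" using \<epsilon> K by (simp add: field_simps)
        finally show ?thesis .
      qed
      ultimately have "r k < y'" using bnd[of k] \<delta>(2) by (simp add: \<epsilon>_def)
      then show ?case using real by simp
    qed
  qed (use y in auto)
qed

locale inl_condg_run =
  fixes F :: "real^'n \<Rightarrow> real^'n"
    and \<Omega> C :: "(real^'n) set"
    and xs :: "real^'n"
    and \<gamma> vt \<omega>1 \<omega>2 lam a b :: real
    and \<sigma> \<kappa> :: ereal
    and x s r y :: "nat \<Rightarrow> real^'n"
    and M P :: "nat \<Rightarrow> real^'n^'n"
    and \<theta> \<eta> :: "nat \<Rightarrow> real"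
  assumes \<Omega>_open: "open \<Omega>"
    and C: "convex C" "compact C" "C \<subseteq> \<Omega>"
    and xs: "xs \<in> C" "F xs = 0" "invertible (jac F xs)"
    and analytic: "real_analytic_on F \<Omega>"
    and gamma_fin: "bdd_above {(mlnorm (matrix_inv (jac F xs)) n F xs) powr (1 / (real n - 1)) | n. n > 1}"
    and gamma_def: "\<gamma> = Sup {(mlnorm (matrix_inv (jac F xs)) n F xs) powr (1 / (real n - 1)) | n. n > 1}"
    and kappa_def: "\<kappa> = Sup {ereal t | t. 0 \<le> t \<and> (\<gamma> = 0 \<or> t < 1 / \<gamma>) \<and> ball xs t \<subseteq> \<Omega>}"
    and par: "0 \<le> vt" "vt < 1" "0 \<le> \<omega>2" "\<omega>2 < \<omega>1" "\<omega>1 * vt + \<omega>2 < 1"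
    and lam: "0 \<le> lam" "lam < (1 - \<omega>2 - \<omega>1 * vt) / (\<omega>1 * (1 + vt))"
    and a_def: "a = \<omega>1 * (1 + vt) * (1 - 3 * lam) + 4 * (1 - \<omega>1 * vt - \<omega>2)"
    and b_def: "b = 1 - \<omega>1 * ((1 + vt) * lam + vt) - \<omega>2"
    and sigma_def: "\<sigma> = min \<kappa> (if \<gamma> = 0 then \<infinity> else ereal ((a - sqrt (a\<^sup>2 - 8 * b\<^sup>2)) / (4 * \<gamma> * b)))"
    and x0: "x 0 \<in> C" "ereal (dist (x 0) xs) < \<sigma>" "x 0 \<noteq> xs"
    and theta: "\<forall>k. 0 \<le> \<theta> k \<and> \<theta> k \<le> lam\<^sup>2 / 2"
    and nostop: "\<forall>k. F (x k) \<noteq> 0"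
    and Minv: "\<forall>k. invertible (M k)"
    and Newton: "\<forall>k. M k *v s k = - F (x k) + r k \<and> y k = x k + s k"
    and step: "\<forall>k. CondG_out C (y k) (x k) (\<theta> k * (norm (s k))\<^sup>2) (x (Suc k))"
    and M1: "\<forall>k. opnorm (matrix_inv (M k) ** jac F (x k)) \<le> \<omega>1"
    and M2: "\<forall>k. opnorm (matrix_inv (M k) ** jac F (x k) - mat 1) \<le> \<omega>2"
    and Pinv: "\<forall>k. invertible (P k)"
    and resid: "\<forall>k. norm (P k *v r k) \<le> \<eta> k * norm (P k *v F (x k))"
    and eta: "\<forall>k. 0 \<le> \<eta> k * cond (P k ** jac F (x k)) \<and> \<eta> k * cond (P k ** jac F (x k)) \<le> vt"
begin

definition rho0 :: real where "rho0 = dist (x 0) xs"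

definition quad_coeff :: real where
  "quad_coeff = \<omega>1 * (1 + vt) * (1 + lam) * \<gamma> / (2 * (1 - \<gamma> * rho0)\<^sup>2 - 1)"

definition lin_coeff :: real where "lin_coeff = \<omega>1 * ((1 + vt) * lam + vt) + \<omega>2"

lemma mlnorm_at_root_nonneg: "0 \<le> mlnorm (matrix_inv (jac F xs)) n F xs"
  using xs(1) C(3) by (intro mlnorm_nonneg[OF \<Omega>_open real_analytic_on_hderiv_differentiable[OF analytic]]) blast

lemma gamma_nonneg: "0 \<le> \<gamma>"
  by (rule Sup_root_bound(1)[OF gamma_fin mlnorm_at_root_nonneg gamma_def])

lemma mlnorm_le_gamma_power: "2 \<le> k \<Longrightarrow> mlnorm (matrix_inv (jac F xs)) k F xs \<le> \<gamma> ^ (k - 1)"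
  by (rule Sup_root_bound(2)[OF gamma_fin mlnorm_at_root_nonneg gamma_def])

lemma omega1_pos: "0 < \<omega>1"
  using par by linarith

lemma b_pos: "0 < b"
proof -
  have "0 < \<omega>1 * (1 + vt)" using omega1_pos par by simp
  then have "lam * (\<omega>1 * (1 + vt)) < 1 - \<omega>2 - \<omega>1 * vt" using lam(2) by (simp add: pos_less_divide_eq)
  then show ?thesis unfolding b_def by (simp add: algebra_simps)
qed

lemma sqrt_theta_le: "sqrt (\<theta> k) \<le> lam"
proof -
  have "\<theta> k \<le> lam\<^sup>2 / 2" using theta by blast
  then have "\<theta> k \<le> lam\<^sup>2" using zero_le_power2[of lam] by linarith
  then show ?thesis using lam(1) real_sqrt_le_mono by fastforce
qed

lemma gamma_bounded_radius:
  obtains R where "gamma_bounded F \<Omega> xs \<gamma> R" "rho0 < R"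
proof -
  have "ereal rho0 < \<kappa>" using x0(2) sigma_def by (simp add: rho0_def)
  then obtain R where R: "0 \<le> R" "\<gamma> = 0 \<or> R < 1 / \<gamma>" "ball xs R \<subseteq> \<Omega>" "rho0 < R"
    unfolding kappa_def less_Sup_iff by auto
  have \<gamma>R: "\<gamma> * R \<le> 1" using R(2) gamma_nonneg by (cases "\<gamma> = 0") (auto simp: field_simps)
  have "0 < rho0" using x0(3) by (simp add: rho0_def)
  then have "0 < R" using R(4) by linarith
  from gamma_bounded.intro[OF \<Omega>_open analytic xs(2,3) gamma_nonneg mlnorm_le_gamma_power R(3) this \<gamma>R]
  have "gamma_bounded F \<Omega> xs \<gamma> R" .
  then show ?thesis using that R(4) by blast
qed

text \<open>The choice of \<open>\<sigma>\<close> (the smaller root of \<open>2 b u\<^sup>2 - a u + b\<close> with \<open>u = \<gamma> \<rho>\<close>) is exactly what makes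
  the step estimate below a contraction on the ball of radius \<open>rho0\<close>.\<close>

lemma contraction:
  shows "1 < 2 * (1 - \<gamma> * rho0)\<^sup>2" "quad_coeff * rho0 + lin_coeff < 1"
proof -
  define Kc where "Kc = \<omega>1 * (1 + vt) * (1 + lam)"
  define u0 where "u0 = \<gamma> * rho0"
  have Kc: "a - 4 * b = Kc" by (simp add: a_def b_def Kc_def algebra_simps)
  have "0 < Kc" unfolding Kc_def using omega1_pos par(1) lam(1) by (intro mult_pos_pos) auto
  have u0: "0 \<le> u0" using gamma_nonneg by (simp add: u0_def rho0_def)
  have "1 < 2 * (1 - u0)\<^sup>2 \<and> Kc * u0 < b * (2 * (1 - u0)\<^sup>2 - 1)"
  proof (cases "\<gamma> = 0")
    case True
    then show ?thesis using b_pos by (simp add: u0_def)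
  next
    case False
    then have \<gamma>: "0 < \<gamma>" using gamma_nonneg by simp
    have "rho0 < (a - sqrt (a\<^sup>2 - 8 * b\<^sup>2)) / (4 * \<gamma> * b)"
      using x0(2) sigma_def False by (simp add: rho0_def)
    from mult_strict_left_mono[OF this \<gamma>]
    have u0_lt: "u0 < (a - sqrt (a\<^sup>2 - 8 * b\<^sup>2)) / (4 * b)" using \<gamma> by (simp add: u0_def)
    have "0 < a - 4 * b" using Kc \<open>0 < Kc\<close> by simp
    from below_smaller_root[OF b_pos this u0 u0_lt] show ?thesis using Kc by simp
  qed
  then have D0: "1 < 2 * (1 - u0)\<^sup>2" and "Kc * u0 / (2 * (1 - u0)\<^sup>2 - 1) < b"
    by (simp_all add: pos_divide_less_eq)
  moreover have "quad_coeff * rho0 = Kc * u0 / (2 * (1 - u0)\<^sup>2 - 1)"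
    by (simp add: quad_coeff_def Kc_def u0_def mult_ac)
  moreover have "lin_coeff = 1 - b" by (simp add: lin_coeff_def b_def)
  ultimately show "1 < 2 * (1 - \<gamma> * rho0)\<^sup>2" "quad_coeff * rho0 + lin_coeff < 1"
    by (simp_all add: u0_def)
qed

lemma step_estimate:
  assumes xk: "x k \<in> C" "dist (x k) xs \<le> rho0"
  shows "x (Suc k) \<in> C"
    and "dist (x (Suc k)) xs \<le> (\<omega>2 + \<omega>1 * vt + \<omega>1 * (1 + vt) * sqrt (\<theta> k)) * dist (x k) xs
      + quad_coeff * (dist (x k) xs)\<^sup>2"
proof -
  obtain R where R: "gamma_bounded F \<Omega> xs \<gamma> R" "rho0 < R" by (rule gamma_bounded_radius)
  interpret gamma_bounded F \<Omega> xs \<gamma> R by (rule R(1))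
  define d where "d = norm (x k - xs)"
  have d: "0 \<le> d" "d \<le> rho0" using xk(2) by (simp_all add: d_def dist_norm)
  have "0 \<le> \<gamma> * d" "\<gamma> * d \<le> \<gamma> * rho0" using d gamma_nonneg by (simp_all add: mult_left_mono)
  moreover have "\<gamma> * rho0 < 1" using gamma_radius[of rho0] R(2) by (simp add: rho0_def)
  ultimately have "(1 - \<gamma> * rho0)\<^sup>2 \<le> (1 - \<gamma> * d)\<^sup>2" by (intro power_mono) auto
  then have D: "2 * (1 - \<gamma> * rho0)\<^sup>2 - 1 \<le> 2 * (1 - \<gamma> * d)\<^sup>2 - 1" by simp
  note D0 = contraction(1)
  have \<theta>: "0 \<le> \<theta> k" using theta by blast
  note one_step = inl_condg_step[OF xk(1) _ _ C(1,2) xs(1) Minv[rule_format]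
      conjunct1[OF Newton[rule_format]] _ \<theta> M1[rule_format] M2[rule_format] Pinv[rule_format]
      resid[rule_format] conjunct2[OF eta[rule_format]] par(1)]
  have cg: "CondG_out C (x k + s k) (x k) (\<theta> k * (norm (s k))\<^sup>2) (x (Suc k))"
    using step Newton by metis
  show "x (Suc k) \<in> C" using one_step(1)[OF _ _ cg] d R(2) D D0 by (simp add: d_def)
  have coeff: "\<omega>1 + \<omega>1 * vt + sqrt (\<theta> k) * (\<omega>1 * (1 + vt)) \<le> \<omega>1 * (1 + vt) * (1 + lam)"
  proof -
    have "sqrt (\<theta> k) * (\<omega>1 * (1 + vt)) \<le> lam * (\<omega>1 * (1 + vt))"
      using sqrt_theta_le[of k] omega1_pos par(1) by (intro mult_right_mono) auto
    then show ?thesis by (simp add: algebra_simps)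
  qed
  have "\<gamma> * d\<^sup>2 / (2 * (1 - \<gamma> * d)\<^sup>2 - 1) \<le> \<gamma> * d\<^sup>2 / (2 * (1 - \<gamma> * rho0)\<^sup>2 - 1)"
    using D D0 gamma_nonneg by (intro divide_left_mono) auto
  then have "(\<omega>1 + \<omega>1 * vt + sqrt (\<theta> k) * (\<omega>1 * (1 + vt))) * (\<gamma> * d\<^sup>2 / (2 * (1 - \<gamma> * d)\<^sup>2 - 1))
      \<le> \<omega>1 * (1 + vt) * (1 + lam) * (\<gamma> * d\<^sup>2 / (2 * (1 - \<gamma> * rho0)\<^sup>2 - 1))"
  proof (rule mult_mono[OF coeff])
    show "0 \<le> \<omega>1 * (1 + vt) * (1 + lam)" using omega1_pos par(1) lam(1) by simp
    show "0 \<le> \<gamma> * d\<^sup>2 / (2 * (1 - \<gamma> * d)\<^sup>2 - 1)" using D D0 gamma_nonneg by simp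
  qed
  also have "\<dots> = quad_coeff * d\<^sup>2" by (simp add: quad_coeff_def)
  finally show "dist (x (Suc k)) xs \<le> (\<omega>2 + \<omega>1 * vt + \<omega>1 * (1 + vt) * sqrt (\<theta> k)) * dist (x k) xs
      + quad_coeff * (dist (x k) xs)\<^sup>2"
    using one_step(2)[OF _ _ cg] d R(2) D D0 by (simp add: d_def dist_norm mult_ac)
qed

lemma coefficients_nonneg: "0 \<le> quad_coeff" "0 \<le> lin_coeff"
  using omega1_pos par lam(1) gamma_nonneg contraction(1) by (simp_all add: quad_coeff_def lin_coeff_def)

lemma quadratic_step_bound:
  assumes "x k \<in> C" "dist (x k) xs \<le> rho0"
  shows "dist (x (Suc k)) xs \<le> quad_coeff * (dist (x k) xs)\<^sup>2 + lin_coeff * dist (x k) xs"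
proof -
  have "\<omega>1 * (1 + vt) * sqrt (\<theta> k) \<le> \<omega>1 * (1 + vt) * lam"
    using sqrt_theta_le[of k] omega1_pos par(1) by (intro mult_left_mono) auto
  then have "(\<omega>2 + \<omega>1 * vt + \<omega>1 * (1 + vt) * sqrt (\<theta> k)) * dist (x k) xs \<le> lin_coeff * dist (x k) xs"
    by (intro mult_right_mono) (simp_all add: lin_coeff_def algebra_simps)
  then show ?thesis using step_estimate(2)[OF assms] by linarith
qed

lemma iterates_contract: "x k \<in> C \<and> dist (x k) xs \<le> (quad_coeff * rho0 + lin_coeff) ^ k * rho0"
proof (induction k)
  case 0
  show ?case using x0(1) by (simp add: rho0_def)
next
  case (Suc k)
  define c where "c = quad_coeff * rho0 + lin_coeff"
  have c: "0 \<le> c" "c < 1"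
    using contraction(2) coefficients_nonneg x0(3) by (simp_all add: c_def rho0_def)
  have "c ^ k * rho0 \<le> rho0" using c by (simp add: power_le_one mult_left_le_one_le rho0_def)
  then have dk: "dist (x k) xs \<le> rho0" using Suc.IH by (simp add: c_def)
  have "dist (x (Suc k)) xs \<le> quad_coeff * (dist (x k) xs)\<^sup>2 + lin_coeff * dist (x k) xs"
    using quadratic_step_bound Suc.IH dk by blast
  also have "\<dots> \<le> c * dist (x k) xs"
    using dk coefficients_nonneg
    by (simp add: c_def power2_eq_square algebra_simps mult_left_mono mult_right_mono)
  also have "\<dots> \<le> c * (c ^ k * rho0)" using Suc.IH c by (simp add: c_def mult_left_mono)
  finally show ?case using step_estimate(1) Suc.IH dk by (simp add: c_def)
qed

lemma dist_iterates:
  shows "x k \<in> C" "0 < dist (x k) xs" "dist (x k) xs \<le> rho0"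
    and "dist (x (Suc k)) xs < dist (x k) xs"
proof -
  define c where "c = quad_coeff * rho0 + lin_coeff"
  have c: "0 \<le> c" "c < 1"
    using contraction(2) coefficients_nonneg x0(3) by (simp_all add: c_def rho0_def)
  show xk: "x k \<in> C" using iterates_contract by blast
  show "0 < dist (x k) xs" using nostop xs(2) by (metis zero_less_dist_iff)
  have "c ^ k * rho0 \<le> rho0" using c by (simp add: power_le_one mult_left_le_one_le rho0_def)
  then show dk: "dist (x k) xs \<le> rho0" using iterates_contract[of k] by (simp add: c_def)
  have "dist (x (Suc k)) xs \<le> quad_coeff * (dist (x k) xs)\<^sup>2 + lin_coeff * dist (x k) xs"
    by (rule quadratic_step_bound[OF xk dk])
  also have "\<dots> \<le> c * dist (x k) xs"
    using dk coefficients_nonneg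
    by (simp add: c_def power2_eq_square algebra_simps mult_left_mono mult_right_mono)
  also have "\<dots> < dist (x k) xs" using c \<open>0 < dist (x k) xs\<close> by simp
  finally show "dist (x (Suc k)) xs < dist (x k) xs" .
qed

lemma iterates_tendsto: "(\<lambda>k. dist (x k) xs) \<longlonglongrightarrow> 0"
proof (rule tendsto_sandwich[of "\<lambda>_. 0" _ _ "\<lambda>k. (quad_coeff * rho0 + lin_coeff) ^ k * rho0"])
  have "0 \<le> quad_coeff * rho0 + lin_coeff"
    using coefficients_nonneg by (simp add: rho0_def)
  then show "(\<lambda>k. (quad_coeff * rho0 + lin_coeff) ^ k * rho0) \<longlonglongrightarrow> 0"
    using contraction(2) by (intro tendsto_mult_left_zero LIMSEQ_power_zero) simp
qed (use iterates_contract in auto)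

lemma limsup_ratio:
  "limsup (\<lambda>k. ereal (dist (x (Suc k)) xs / dist (x k) xs))
    \<le> ereal (\<omega>1 * ((1 + vt) * sqrt (2 * real_of_ereal (limsup (\<lambda>k. ereal (\<theta> k)))) + vt) + \<omega>2)"
proof -
  define L where "L = real_of_ereal (limsup (\<lambda>k. ereal (\<theta> k)))"
  have "dist (x (Suc k)) xs / dist (x k) xs
      \<le> (\<omega>2 + \<omega>1 * vt) + \<omega>1 * (1 + vt) * sqrt (\<theta> k) + quad_coeff * dist (x k) xs" for k
    using step_estimate(2)[OF dist_iterates(1,3)] dist_iterates(2)[of k]
    by (simp add: pos_divide_le_eq power2_eq_square algebra_simps)
  then have "limsup (\<lambda>k. ereal (dist (x (Suc k)) xs / dist (x k) xs))
      \<le> ereal ((\<omega>2 + \<omega>1 * vt) + \<omega>1 * (1 + vt) * sqrt L)"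
    unfolding L_def using omega1_pos par(1) coefficients_nonneg(1) iterates_tendsto theta
    by (intro limsup_le_sqrt_limsup[where K=quad_coeff and \<Theta>="lam\<^sup>2 / 2"]) auto
  also have "\<dots> \<le> ereal (\<omega>1 * ((1 + vt) * sqrt (2 * L) + vt) + \<omega>2)"
  proof -
    have "0 \<le> L" using limsup_real_bounded(2)[of \<theta> "lam\<^sup>2 / 2"] theta by (simp add: L_def)
    then have "\<omega>1 * (1 + vt) * sqrt L \<le> \<omega>1 * (1 + vt) * sqrt (2 * L)"
      using omega1_pos par(1) by (intro mult_left_mono) auto
    then show ?thesis by (simp add: algebra_simps)
  qed
  finally show ?thesis by (simp add: L_def)
qed

theorem convergence:
  shows "(\<forall>k. x k \<in> C \<and> ereal (dist (x k) xs) < \<sigma>)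
     \<and> x \<longlonglongrightarrow> xs
     \<and> (\<forall>k. dist (x (Suc k)) xs < dist (x k) xs)
     \<and> limsup (\<lambda>k. ereal (dist (x (Suc k)) xs / dist (x k) xs))
         \<le> ereal (\<omega>1 * ((1 + vt) * sqrt (2 * real_of_ereal (limsup (\<lambda>k. ereal (\<theta> k)))) + vt) + \<omega>2)
     \<and> (\<forall>k. dist (x (Suc k)) xs
         \<le> \<omega>1 * (1 + vt) * (1 + lam) * \<gamma> / (2 * (1 - \<gamma> * dist (x 0) xs)\<^sup>2 - 1) * (dist (x k) xs)\<^sup>2
           + (\<omega>1 * ((1 + vt) * lam + vt) + \<omega>2) * dist (x k) xs)"
proof (intro conjI allI)
  fix k
  show "x k \<in> C" by (rule dist_iterates(1))
  show "ereal (dist (x k) xs) < \<sigma>"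
    using le_less_trans[OF _ x0(2), of "ereal (dist (x k) xs)"] dist_iterates(3)[of k]
    by (simp add: rho0_def)
  show "dist (x (Suc k)) xs < dist (x k) xs" by (rule dist_iterates(4))
  show "dist (x (Suc k)) xs
      \<le> \<omega>1 * (1 + vt) * (1 + lam) * \<gamma> / (2 * (1 - \<gamma> * dist (x 0) xs)\<^sup>2 - 1) * (dist (x k) xs)\<^sup>2
        + (\<omega>1 * ((1 + vt) * lam + vt) + \<omega>2) * dist (x k) xs"
    using quadratic_step_bound[OF dist_iterates(1,3)] by (simp add: quad_coeff_def lin_coeff_def rho0_def)
next
  show "x \<longlonglongrightarrow> xs" using iterates_tendsto tendsto_dist_iff by blast
qed (rule limsup_ratio)

end

theorem corollary2:
  fixes F :: "real^'n \<Rightarrow> real^'n"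
    and \<Omega> C :: "(real^'n) set"
    and xs :: "real^'n"
    and \<gamma> vt \<omega>1 \<omega>2 lam a b :: real
    and \<sigma> \<kappa> :: ereal
    and x s r y :: "nat \<Rightarrow> real^'n"
    and M P :: "nat \<Rightarrow> real^'n^'n"
    and \<theta> \<eta> :: "nat \<Rightarrow> real"
  assumes \<Omega>_open: "open \<Omega>"
    and F_C1: "\<forall>z\<in>\<Omega>. F differentiable (at z)" "continuous_on \<Omega> (jac F)"
    and C: "convex C" "compact C" "C \<noteq> {}" "C \<subseteq> \<Omega>"
    and xs: "xs \<in> C" "F xs = 0" "invertible (jac F xs)"
    and analytic: "real_analytic_on F \<Omega>"
    and gamma_fin: "bdd_above {(mlnorm (matrix_inv (jac F xs)) n F xs) powr (1 / (real n - 1)) | n. n > 1}"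
    and gamma_def: "\<gamma> = Sup {(mlnorm (matrix_inv (jac F xs)) n F xs) powr (1 / (real n - 1)) | n. n > 1}"
    and kappa_def: "\<kappa> = Sup {ereal t | t. 0 \<le> t \<and> (\<gamma> = 0 \<or> t < 1 / \<gamma>) \<and> ball xs t \<subseteq> \<Omega>}"
    and par: "0 \<le> vt" "vt < 1" "0 \<le> \<omega>2" "\<omega>2 < \<omega>1" "\<omega>1 * vt + \<omega>2 < 1"
    and lam: "0 \<le> lam" "lam < (1 - \<omega>2 - \<omega>1 * vt) / (\<omega>1 * (1 + vt))"
    and a_def: "a = \<omega>1 * (1 + vt) * (1 - 3 * lam) + 4 * (1 - \<omega>1 * vt - \<omega>2)"
    and b_def: "b = 1 - \<omega>1 * ((1 + vt) * lam + vt) - \<omega>2"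
    and sigma_def: "\<sigma> = min \<kappa> (if \<gamma> = 0 then \<infinity> else ereal ((a - sqrt (a\<^sup>2 - 8 * b\<^sup>2)) / (4 * \<gamma> * b)))"
    and x0: "x 0 \<in> C" "ereal (dist (x 0) xs) < \<sigma>" "x 0 \<noteq> xs"
    and theta: "\<forall>k. 0 \<le> \<theta> k \<and> \<theta> k \<le> lam\<^sup>2 / 2"
    and nostop: "\<forall>k. F (x k) \<noteq> 0"
    and Minv: "\<forall>k. invertible (M k)"
    and Newton: "\<forall>k. M k *v s k = - F (x k) + r k \<and> y k = x k + s k"
    and step: "\<forall>k. CondG_out C (y k) (x k) (\<theta> k * (norm (s k))\<^sup>2) (x (Suc k))"
    and M1: "\<forall>k. opnorm (matrix_inv (M k) ** jac F (x k)) \<le> \<omega>1"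
    and M2: "\<forall>k. opnorm (matrix_inv (M k) ** jac F (x k) - mat 1) \<le> \<omega>2"
    and Pinv: "\<forall>k. invertible (P k)"
    and resid: "\<forall>k. norm (P k *v r k) \<le> \<eta> k * norm (P k *v F (x k))"
    and eta: "\<forall>k. 0 \<le> \<eta> k * cond (P k ** jac F (x k)) \<and> \<eta> k * cond (P k ** jac F (x k)) \<le> vt"
  shows "(\<forall>k. x k \<in> C \<and> ereal (dist (x k) xs) < \<sigma>)
     \<and> x \<longlonglongrightarrow> xs
     \<and> (\<forall>k. dist (x (Suc k)) xs < dist (x k) xs)
     \<and> limsup (\<lambda>k. ereal (dist (x (Suc k)) xs / dist (x k) xs))
         \<le> ereal (\<omega>1 * ((1 + vt) * sqrt (2 * real_of_ereal (limsup (\<lambda>k. ereal (\<theta> k)))) + vt) + \<omega>2)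
     \<and> (\<forall>k. dist (x (Suc k)) xs
         \<le> \<omega>1 * (1 + vt) * (1 + lam) * \<gamma> / (2 * (1 - \<gamma> * dist (x 0) xs)\<^sup>2 - 1) * (dist (x k) xs)\<^sup>2
           + (\<omega>1 * ((1 + vt) * lam + vt) + \<omega>2) * dist (x k) xs)"
proof -
  interpret inl_condg_run F \<Omega> C xs \<gamma> vt \<omega>1 \<omega>2 lam a b \<sigma> \<kappa> x s r y M P \<theta> \<eta>
    by (rule inl_condg_run.intro[OF \<Omega>_open C(1,2,4) xs analytic gamma_fin gamma_def kappa_def par lam
        a_def b_def sigma_def x0 theta nostop Minv Newton step M1 M2 Pinv resid eta])
  show ?thesis by (rule convergence)
qed

end
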